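(* There are three absolute positive constants $C_1,C_2,C_3$ with the following property. Let $\Omega$ be a compact subset of $\mathbb{R}^d$ with a Borel probability measure $\mu$, let $s\ge2$ be an integer, and let $X_N\subset L_{2s}(\Omega,\mu)$ be any (real or complex) $N$-dimensional subspace. Then for every integer $m\ge C_3N^s$ there exist points $\xi^1,\dots,\xi^m\in\Omega$ and positive weights $\lambda_1,\dots,\lambda_m$ such that for all $f\in X_N$ $$C_1\|f\|_{2s}^{2s}\le\sum_{\nu=1}^m\lambda_\nu|f(\xi^\nu)|^{2s}\le C_2\|f\|_{2s}^{2s}.$$
   Context: $\|f\|_p=(\int_\Omega|f|^p\,d\mu)^{1/p}$. Elements of $L_q(\Omega,\mu)$ are understood as specific functions defined $\mu$-almost everywhere; since $X_N$ is spanned by finitely many such functions, there is a $\mu$-null set $E\subset\Omega$ off which every $f\in X_N$ is defined, and sample points are taken from $\Omega\setminus E$. *)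

theory Defs
  imports "HOL-Probability.Probability"
begin

text \<open>Points of R^d are modelled as functions nat => real vanishing at all
coordinates >= d (so that d can be quantified inside the statement, which is
needed because the constants are absolute, i.e. independent of d).
The type nat => real carries the product topology.\<close>

definition euclid_space :: "nat \<Rightarrow> (nat \<Rightarrow> real) set" where
  "euclid_space d = {x. \<forall>i\<ge>d. x i = 0}"

definition compact_borel_prob :: "nat \<Rightarrow> (nat \<Rightarrow> real) set \<Rightarrow> (nat \<Rightarrow> real) measure \<Rightarrow> bool" where
  "compact_borel_prob d \<Omega> \<mu> \<longleftrightarrow>
     \<Omega> \<subseteq> euclid_space d \<and> compact \<Omega> \<and>
     space \<mu> = \<Omega> \<and> sets \<mu> = sets (restrict_space borel \<Omega>) \<and> prob_space \<mu>"

text \<open>u 0, ..., u (N-1) are (representatives of) elements of L_{2s}(Omega,mu) that are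
linearly independent in L_{2s} (i.e. modulo mu-null functions); their span over the
scalar field 'k is an N-dimensional subspace X_N of L_{2s}.\<close>
definition L_basis :: "(nat \<Rightarrow> real) measure \<Rightarrow> nat \<Rightarrow> nat \<Rightarrow> (nat \<Rightarrow> (nat \<Rightarrow> real) \<Rightarrow> 'k::real_normed_field) \<Rightarrow> bool" where
  "L_basis \<mu> s N u \<longleftrightarrow>
     (\<forall>i<N. u i \<in> borel_measurable \<mu> \<and> integrable \<mu> (\<lambda>x. norm (u i x) ^ (2 * s))) \<and>
     (\<forall>c::nat \<Rightarrow> 'k. (AE x in \<mu>. (\<Sum>i<N. c i * u i x) = 0) \<longrightarrow> (\<forall>i<N. c i = 0))"

definition Lp_pow :: "(nat \<Rightarrow> real) measure \<Rightarrow> nat \<Rightarrow> ((nat \<Rightarrow> real) \<Rightarrow> 'k::real_normed_field) \<Rightarrow> real" where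
  "Lp_pow \<mu> s f = (\<integral>x. norm (f x) ^ (2 * s) \<partial>\<mu>)"

end

(*
  Since |f|^(2s) = |f^s|^2 and f^s lies in the span of the products u_i1 * ... * u_is, it suffices
  to discretize the L_2 norm on a space of dimension n <= N^s, spanned by an orthonormal system
  e_1, ..., e_n obtained by Gram-Schmidt.  This is done by the barrier method of Batson, Spielman and
  Srivastava: rank-one matrices t e(x) e(x)^* are added one at a time while the spectrum stays between
  a lower barrier l and an upper barrier u, moved by 1 and 4 per step, whose potentials
  tr (A - l I)^-1 and tr (u I - A)^-1 never increase.  A suitable node x always exists because, e being
  orthonormal, the mu-average of e(x)^* Z e(x) is tr Z.  After m >= 4 n steps the spectrum lies in
  [m - 2 n, 4 m + 8 n], which gives the constants 1 and 12 once the weights are scaled by 2 / m.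
*)

theory Submission
  imports Defs "Jordan_Normal_Form.Determinant"
begin

lemmas times_if_distrib = if_distrib[of "times a" for a] if_distrib[of "\<lambda>x. x * a" for a]

lemma cmod_sq_le_of_quadratic_nonneg:
  fixes a c :: real and b :: complex
  assumes quad: "\<And>l::complex. 0 \<le> a - 2 * Re (l * b) + (cmod l)\<^sup>2 * c" and "c \<ge> 0"
  shows "(cmod b)\<^sup>2 \<le> a * c"
proof (cases "c = 0")
  case True
  show ?thesis
  proof (cases "b = 0")
    case False
    define t where "t = (a + 1) / (2 * (cmod b)\<^sup>2)"
    have "cnj b * b = of_real ((cmod b)\<^sup>2)"
      by (metis complex_norm_square mult.commute)
    then have "Re (of_real t * cnj b * b) = t * (cmod b)\<^sup>2"
      by (simp add: mult.assoc del: of_real_power)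
    also have "\<dots> = (a + 1) / 2"
      using False by (simp add: t_def)
    finally show ?thesis
      using quad[of "of_real t * cnj b"] True by simp
  qed (use True in simp)
next
  case False
  then have "c > 0"
    using \<open>c \<ge> 0\<close> by simp
  define l where "l = cnj b / of_real c"
  have "Re (l * b) = (cmod b)\<^sup>2 / c"
    by (simp add: l_def complex_norm_square[symmetric] mult.commute)
  moreover have "(cmod l)\<^sup>2 = (cmod b)\<^sup>2 / c\<^sup>2"
    by (simp add: l_def norm_divide power_divide)
  ultimately have "0 \<le> a - 2 * ((cmod b)\<^sup>2 / c) + (cmod b)\<^sup>2 / c\<^sup>2 * c"
    using quad[of l] by simp
  also have "\<dots> = a - (cmod b)\<^sup>2 / c"
    using \<open>c > 0\<close> by (simp add: power2_eq_square field_simps)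
  finally show ?thesis
    using \<open>c > 0\<close> by (simp add: field_simps)
qed

lemma sq_le_of_quadratic_nonneg:
  fixes T a c :: real
  assumes "\<And>l. 0 \<le> T - 2 * l * a + l\<^sup>2 * c" and "c > 0"
  shows "a\<^sup>2 \<le> T * c"
proof -
  have "0 \<le> T - 2 * (a / c) * a + (a / c)\<^sup>2 * c"
    by (rule assms(1))
  also have "\<dots> = T - a\<^sup>2 / c"
    using assms(2) by (simp add: power2_eq_square field_simps)
  finally show ?thesis
    using assms(2) by (simp add: field_simps)
qed

lemma lower_barrier_arith:
  fixes a c T \<delta> :: real
  assumes "a > 0" "\<delta> > 0" "T \<ge> 0" "a\<^sup>2 \<le> T * c" "\<delta> * c < 1"
  shows "1 / \<delta> - c \<le> (a + \<delta> * T) / (\<delta> * a) - (c + \<delta> * a)"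
proof -
  have "\<delta> * a\<^sup>2 \<le> T * (\<delta> * c)"
    using assms(2,4) by (simp add: mult_left_mono mult.left_commute)
  also have "\<dots> \<le> T"
    using assms(3,5) by (simp add: mult_left_le)
  finally have "\<delta> * a \<le> T / a"
    using \<open>a > 0\<close> by (simp add: field_simps power2_eq_square)
  then show ?thesis
    using assms(1,2) by (simp add: field_simps)
qed

section \<open>Orthonormal systems in \<open>L\<^sub>2\<close>\<close>

definition square_integrable :: "'a measure \<Rightarrow> ('a \<Rightarrow> complex) \<Rightarrow> bool" where
  "square_integrable M f \<longleftrightarrow> f \<in> borel_measurable M \<and> integrable M (\<lambda>x. (cmod (f x))\<^sup>2)"

definition orthonormal_system :: "'a measure \<Rightarrow> nat \<Rightarrow> (nat \<Rightarrow> 'a \<Rightarrow> complex) \<Rightarrow> bool" where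
  "orthonormal_system M n e \<longleftrightarrow> (\<forall>k<n. square_integrable M (e k)) \<and>
     (\<forall>i<n. \<forall>j<n. (\<integral>x. e j x * cnj (e i x) \<partial>M) = (if i = j then 1 else 0))"

lemma sq_norm_add_le: "(cmod (a + b))\<^sup>2 \<le> 2 * (cmod a)\<^sup>2 + 2 * (cmod b)\<^sup>2"
proof -
  have "(cmod (a + b))\<^sup>2 \<le> (cmod a + cmod b)\<^sup>2"
    by (simp add: norm_triangle_ineq power_mono)
  also have "\<dots> \<le> 2 * (cmod a)\<^sup>2 + 2 * (cmod b)\<^sup>2"
    using zero_le_power2[of "cmod a - cmod b"] by (simp add: power2_eq_square algebra_simps)
  finally show ?thesis .
qed

lemma square_integrable_mult_cnj:
  assumes "square_integrable M f" "square_integrable M g"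
  shows "integrable M (\<lambda>x. f x * cnj (g x))"
proof (rule Bochner_Integration.integrable_bound)
  show "integrable M (\<lambda>x. (cmod (f x))\<^sup>2 + (cmod (g x))\<^sup>2)"
    using assms by (auto simp: square_integrable_def)
  have "(\<lambda>x. cnj (g x)) \<in> borel_measurable M"
    using assms unfolding square_integrable_def
    by (intro borel_measurable_continuous_on[OF linear_continuous_on[OF bounded_linear_cnj]]) auto
  then show "(\<lambda>x. f x * cnj (g x)) \<in> borel_measurable M"
    using assms by (auto simp: square_integrable_def)
  show "AE x in M. norm (f x * cnj (g x)) \<le> norm ((cmod (f x))\<^sup>2 + (cmod (g x))\<^sup>2)"
  proof (intro AE_I2)
    fix x
    have "2 * (cmod (f x) * cmod (g x)) \<le> (cmod (f x))\<^sup>2 + (cmod (g x))\<^sup>2"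
      using zero_le_power2[of "cmod (f x) - cmod (g x)"] by (simp add: power2_eq_square algebra_simps)
    moreover have "0 \<le> cmod (f x) * cmod (g x)"
      by simp
    ultimately have "cmod (f x) * cmod (g x) \<le> (cmod (f x))\<^sup>2 + (cmod (g x))\<^sup>2"
      by linarith
    then show "norm (f x * cnj (g x)) \<le> norm ((cmod (f x))\<^sup>2 + (cmod (g x))\<^sup>2)"
      by (simp add: norm_mult)
  qed
qed

lemma square_integrable_add:
  assumes "square_integrable M f" "square_integrable M g"
  shows "square_integrable M (\<lambda>x. f x + g x)"
proof -
  have "integrable M (\<lambda>x. (cmod (f x + g x))\<^sup>2)"
  proof (rule Bochner_Integration.integrable_bound)
    show "integrable M (\<lambda>x. 2 * (cmod (f x))\<^sup>2 + 2 * (cmod (g x))\<^sup>2)"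
      using assms by (auto simp: square_integrable_def)
  qed (use assms in \<open>auto simp: square_integrable_def sq_norm_add_le\<close>)
  then show ?thesis
    using assms by (auto simp: square_integrable_def intro: borel_measurable_add)
qed

lemma square_integrable_scale: "square_integrable M f \<Longrightarrow> square_integrable M (\<lambda>x. c * f x)"
  by (auto simp: square_integrable_def norm_mult power_mult_distrib)

lemma square_integrable_sum:
  "finite I \<Longrightarrow> (\<And>i. i \<in> I \<Longrightarrow> square_integrable M (f i)) \<Longrightarrow> square_integrable M (\<lambda>x. \<Sum>i\<in>I. f i x)"
  by (induction I rule: finite_induct) (simp_all add: square_integrable_add, simp add: square_integrable_def)

lemma square_integrable_diff:
  "square_integrable M f \<Longrightarrow> square_integrable M g \<Longrightarrow> square_integrable M (\<lambda>x. f x - g x)"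
  using square_integrable_add[of M f "\<lambda>x. - 1 * g x"] square_integrable_scale[of M g "- 1"] by simp

lemma orthonormal_residual:
  assumes e: "orthonormal_system M n e" and \<phi>: "square_integrable M \<phi>" and "j < n"
  defines "c \<equiv> \<lambda>k. \<integral>x. \<phi> x * cnj (e k x) \<partial>M"
  shows "(\<integral>x. (\<phi> x - (\<Sum>k<n. c k * e k x)) * cnj (e j x) \<partial>M) = 0"
proof -
  have L: "square_integrable M (e k)" if "k < n" for k
    using e that by (simp add: orthonormal_system_def)
  have int: "integrable M (\<lambda>x. c k * (e k x * cnj (e j x)))" if "k < n" for k
    using L that \<open>j < n\<close> by (intro integrable_mult_right square_integrable_mult_cnj) auto
  have expand: "(\<phi> x - (\<Sum>k<n. c k * e k x)) * cnj (e j x)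
      = \<phi> x * cnj (e j x) - (\<Sum>k<n. c k * (e k x * cnj (e j x)))" for x
    by (simp add: left_diff_distrib sum_distrib_right mult.assoc)
  have "(\<integral>x. (\<phi> x - (\<Sum>k<n. c k * e k x)) * cnj (e j x) \<partial>M)
      = (\<integral>x. \<phi> x * cnj (e j x) \<partial>M) - (\<integral>x. (\<Sum>k<n. c k * (e k x * cnj (e j x))) \<partial>M)"
    unfolding expand
    by (intro Bochner_Integration.integral_diff square_integrable_mult_cnj[OF \<phi> L[OF \<open>j < n\<close>]]
        Bochner_Integration.integrable_sum) (use int in simp)
  also have "(\<integral>x. \<phi> x * cnj (e j x) \<partial>M) = c j"
    by (simp add: c_def)
  also have "(\<integral>x. (\<Sum>k<n. c k * (e k x * cnj (e j x))) \<partial>M) = (\<Sum>k<n. c k * (\<integral>x. e k x * cnj (e j x) \<partial>M))"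
    using int by (simp add: Bochner_Integration.integral_sum)
  also have "\<dots> = (\<Sum>k<n. if k = j then c j else 0)"
    using e \<open>j < n\<close> by (intro sum.cong) (auto simp: orthonormal_system_def)
  finally show ?thesis
    using \<open>j < n\<close> by simp
qed

lemma orthonormal_system_extend:
  assumes e: "orthonormal_system M n e" and r: "square_integrable M r"
    and orth: "\<And>j. j < n \<Longrightarrow> (\<integral>x. r x * cnj (e j x) \<partial>M) = 0"
    and pos: "(\<integral>x. (cmod (r x))\<^sup>2 \<partial>M) > 0"
  defines "s \<equiv> sqrt (\<integral>x. (cmod (r x))\<^sup>2 \<partial>M)"
  shows "orthonormal_system M (Suc n) (e(n := \<lambda>x. r x / of_real s))"
proof -
  let ?e = "e(n := \<lambda>x. r x / of_real s)"
  have "s > 0" "s * s = (\<integral>x. (cmod (r x))\<^sup>2 \<partial>M)"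
    using pos by (simp_all add: s_def)
  have "(\<lambda>x. r x * cnj (r x)) = (\<lambda>x. of_real ((cmod (r x))\<^sup>2))"
    by (simp add: complex_norm_square del: of_real_power)
  then have rr: "(\<integral>x. r x * cnj (r x) \<partial>M) = of_real (s * s)"
    unfolding \<open>s * s = _\<close> by (simp del: of_real_power)
  have "square_integrable M (\<lambda>x. inverse (of_real s) * r x)"
    by (rule square_integrable_scale[OF r])
  then have "\<forall>k<Suc n. square_integrable M (?e k)"
    using e by (auto simp: orthonormal_system_def less_Suc_eq field_simps)
  moreover have "(\<integral>x. ?e j x * cnj (?e i x) \<partial>M) = (if i = j then 1 else 0)"
    if i: "i < Suc n" and j: "j < Suc n" for i j
  proof -
    consider "i < n" "j < n" | "i = n" "j < n" | "i < n" "j = n" | "i = n" "j = n"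
      using i j unfolding less_Suc_eq by blast
    then show ?thesis
    proof cases
      case 1
      then show ?thesis
        using e by (simp add: orthonormal_system_def)
    next
      case 2
      have "(\<integral>x. ?e j x * cnj (?e i x) \<partial>M) = cnj (\<integral>x. r x * cnj (e j x) \<partial>M) / of_real s"
        using 2 by (simp add: mult.commute flip: Bochner_Integration.integral_cnj)
      then show ?thesis
        using 2 orth by simp
    next
      case 3
      then show ?thesis
        using orth by simp
    next
      case 4
      then show ?thesis
        using rr \<open>s > 0\<close> by (simp add: power2_eq_square)
    qed
  qed
  ultimately show ?thesis
    by (simp add: orthonormal_system_def)
qed

lemma orthonormal_system_insert:
  assumes e: "orthonormal_system M n e" and \<phi>: "square_integrable M \<phi>"
    and span: "\<forall>f\<in>F. \<exists>b. AE x in M. f x = (\<Sum>k<n. b k * e k x)"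
  shows "\<exists>n' e'. n' \<le> Suc n \<and> orthonormal_system M n' e' \<and>
    (\<forall>f\<in>insert \<phi> F. \<exists>b. AE x in M. f x = (\<Sum>k<n'. b k * e' k x))"
proof -
  define c where "c k = (\<integral>x. \<phi> x * cnj (e k x) \<partial>M)" for k
  define r where "r x = \<phi> x - (\<Sum>k<n. c k * e k x)" for x
  have r: "square_integrable M r"
    using e \<phi> unfolding r_def orthonormal_system_def
    by (intro square_integrable_diff square_integrable_sum square_integrable_scale) auto
  show ?thesis
  proof (cases "(\<integral>x. (cmod (r x))\<^sup>2 \<partial>M) = 0")
    case True
    then have "AE x in M. (cmod (r x))\<^sup>2 = 0"
      using r by (subst integral_nonneg_eq_0_iff_AE[symmetric]) (auto simp: square_integrable_def)
    then have "AE x in M. \<phi> x = (\<Sum>k<n. c k * e k x)"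
      by (rule AE_mp) (simp add: r_def)
    then show ?thesis
      using e span by (intro exI[of _ n] exI[of _ e]) auto
  next
    case False
    then have pos: "(\<integral>x. (cmod (r x))\<^sup>2 \<partial>M) > 0"
      by (simp add: order_le_neq_trans)
    define s where "s = sqrt (\<integral>x. (cmod (r x))\<^sup>2 \<partial>M)"
    define e' where "e' = e(n := \<lambda>x. r x / of_real s)"
    have e': "orthonormal_system M (Suc n) e'"
      unfolding e'_def s_def
      by (rule orthonormal_system_extend[OF e r _ pos])
        (use orthonormal_residual[OF e \<phi>] in \<open>simp add: r_def c_def\<close>)
    have extend: "(\<Sum>k<Suc n. (b(n := a)) k * e' k x) = (\<Sum>k<n. b k * e k x) + a * e' n x" for a b x
      by (auto simp: e'_def intro!: sum.cong)
    have "s > 0"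
      using pos by (simp add: s_def)
    then have "\<phi> x = (\<Sum>k<Suc n. (c(n := of_real s)) k * e' k x)" for x
      by (simp add: extend e'_def r_def)
    then have "\<exists>b. AE x in M. \<phi> x = (\<Sum>k<Suc n. b k * e' k x)"
      by blast
    moreover have "\<exists>b. AE x in M. f x = (\<Sum>k<Suc n. b k * e' k x)" if "f \<in> F" for f
    proof -
      obtain b where "AE x in M. f x = (\<Sum>k<n. b k * e k x)"
        using span \<open>f \<in> F\<close> by blast
      then show ?thesis
        by (intro exI[of _ "b(n := 0)"]) (simp only: extend, simp)
    qed
    ultimately show ?thesis
      using e' by (intro exI[of _ "Suc n"] exI[of _ e']) auto
  qed
qed

lemma gram_schmidt:
  assumes "finite F" "\<And>f. f \<in> F \<Longrightarrow> square_integrable M f"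
  shows "\<exists>n e. n \<le> card F \<and> orthonormal_system M n e \<and> (\<forall>f\<in>F. \<exists>b. AE x in M. f x = (\<Sum>k<n. b k * e k x))"
  using assms
proof (induction F rule: finite_induct)
  case empty
  show ?case
    by (intro exI[of _ 0]) (simp add: orthonormal_system_def)
next
  case (insert \<phi> F)
  then obtain n e where "n \<le> card F" "orthonormal_system M n e"
    "\<forall>f\<in>F. \<exists>b. AE x in M. f x = (\<Sum>k<n. b k * e k x)"
    by auto
  then obtain n' e' where "n' \<le> Suc n" "orthonormal_system M n' e'"
    "\<forall>f\<in>insert \<phi> F. \<exists>b. AE x in M. f x = (\<Sum>k<n'. b k * e' k x)"
    using orthonormal_system_insert[of M n e \<phi> F] insert.prems by auto
  moreover have "Suc n \<le> card (insert \<phi> F)"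
    using \<open>n \<le> card F\<close> insert.hyps by simp
  ultimately show ?case
    by (intro exI[of _ n'] exI[of _ e']) simp
qed

section \<open>Complex matrices of a fixed size\<close>

type_synonym cvec = "nat \<Rightarrow> complex"
type_synonym cmat = "nat \<Rightarrow> nat \<Rightarrow> complex"

definition mat_add :: "cmat \<Rightarrow> cmat \<Rightarrow> cmat" where
  "mat_add A B = (\<lambda>i j. A i j + B i j)"

definition mat_scale :: "complex \<Rightarrow> cmat \<Rightarrow> cmat" where
  "mat_scale c A = (\<lambda>i j. c * A i j)"

definition mat_adj :: "cmat \<Rightarrow> cmat" where
  "mat_adj A = (\<lambda>i j. cnj (A j i))"

locale square_matrices =
  fixes n :: nat
begin

text \<open>The size \<open>n\<close> is a parameter rather than a type because it is produced by Gram--Schmidt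
  inside the proof.  Matrices of size \<open>n\<close> are functions vanishing outside \<open>{..<n} \<times> {..<n}\<close>;
  vectors are arbitrary functions of which only the first \<open>n\<close> entries are ever read.\<close>

definition is_mat :: "cmat \<Rightarrow> bool" where
  "is_mat A \<longleftrightarrow> (\<forall>i j. n \<le> i \<or> n \<le> j \<longrightarrow> A i j = 0)"

definition mat_mult :: "cmat \<Rightarrow> cmat \<Rightarrow> cmat" where
  "mat_mult A B = (\<lambda>i j. if i < n \<and> j < n then \<Sum>k<n. A i k * B k j else 0)"

definition mat_id :: cmat where
  "mat_id = (\<lambda>i j. if i < n \<and> i = j then 1 else 0)"

definition hermitian :: "cmat \<Rightarrow> bool" where
  "hermitian A \<longleftrightarrow> is_mat A \<and> mat_adj A = A"

definition mat_trace :: "cmat \<Rightarrow> complex" where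
  "mat_trace A = (\<Sum>i<n. A i i)"

definition cinner :: "cvec \<Rightarrow> cvec \<Rightarrow> complex" where
  "cinner x y = (\<Sum>i<n. cnj (x i) * y i)"

definition mat_vec :: "cmat \<Rightarrow> cvec \<Rightarrow> cvec" where
  "mat_vec A y = (\<lambda>i. \<Sum>j<n. A i j * y j)"

definition qform :: "cmat \<Rightarrow> cvec \<Rightarrow> complex" where
  "qform A y = cinner y (mat_vec A y)"

definition outer_prod :: "cvec \<Rightarrow> cvec \<Rightarrow> cmat" where
  "outer_prod y z = (\<lambda>i j. if i < n \<and> j < n then y i * cnj (z j) else 0)"

definition nonzero_vec :: "cvec \<Rightarrow> bool" where
  "nonzero_vec y \<longleftrightarrow> (\<exists>i<n. y i \<noteq> 0)"

definition pos_def :: "cmat \<Rightarrow> bool" where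
  "pos_def A \<longleftrightarrow> hermitian A \<and> (\<forall>y. nonzero_vec y \<longrightarrow> Re (qform A y) > 0)"

definition mat_inv :: "cmat \<Rightarrow> cmat" where
  "mat_inv A = (SOME X. is_mat X \<and> mat_mult A X = mat_id \<and> mat_mult X A = mat_id)"

lemma is_mat_mult [simp]: "is_mat (mat_mult A B)"
  by (auto simp: is_mat_def mat_mult_def)

lemma is_mat_id [simp]: "is_mat mat_id"
  unfolding is_mat_def mat_id_def by auto

lemma is_mat_outer_prod [simp]: "is_mat (outer_prod y z)"
  unfolding is_mat_def outer_prod_def by auto

lemma is_mat_add [simp]: "is_mat A \<Longrightarrow> is_mat B \<Longrightarrow> is_mat (mat_add A B)"
  by (auto simp: is_mat_def mat_add_def)

lemma is_mat_scale [simp]: "is_mat A \<Longrightarrow> is_mat (mat_scale c A)"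
  by (auto simp: is_mat_def mat_scale_def)

lemma mat_mult_assoc: "mat_mult (mat_mult A B) C = mat_mult A (mat_mult B C)"
proof (intro ext)
  fix i j
  show "mat_mult (mat_mult A B) C i j = mat_mult A (mat_mult B C) i j"
  proof (cases "i < n \<and> j < n")
    case True
    have "(\<Sum>k<n. (\<Sum>l<n. A i l * B l k) * C k j) = (\<Sum>l<n. \<Sum>k<n. A i l * B l k * C k j)"
      by (subst sum.swap) (simp add: sum_distrib_right)
    also have "\<dots> = (\<Sum>l<n. A i l * (\<Sum>k<n. B l k * C k j))"
      by (simp add: sum_distrib_left mult.assoc)
    finally show ?thesis
      using True by (simp add: mat_mult_def cong: sum.cong_simp)
  qed (auto simp: mat_mult_def)
qed

lemma mat_mult_id_left: "is_mat A \<Longrightarrow> mat_mult mat_id A = A"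
  by (auto simp: mat_mult_def mat_id_def is_mat_def fun_eq_iff times_if_distrib cong: if_cong)

lemma mat_mult_id_right: "is_mat A \<Longrightarrow> mat_mult A mat_id = A"
  by (auto simp: mat_mult_def mat_id_def is_mat_def fun_eq_iff times_if_distrib cong: if_cong)

lemma mat_mult_add_left: "mat_mult (mat_add A B) C = mat_add (mat_mult A C) (mat_mult B C)"
  by (auto simp: mat_mult_def mat_add_def fun_eq_iff distrib_right sum.distrib)

lemma mat_mult_add_right: "mat_mult C (mat_add A B) = mat_add (mat_mult C A) (mat_mult C B)"
  by (auto simp: mat_mult_def mat_add_def fun_eq_iff distrib_left sum.distrib)

lemma mat_mult_scale_left: "mat_mult (mat_scale c A) B = mat_scale c (mat_mult A B)"
  by (auto simp: mat_mult_def mat_scale_def fun_eq_iff sum_distrib_left mult.assoc)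

lemma mat_mult_scale_right: "mat_mult A (mat_scale c B) = mat_scale c (mat_mult A B)"
  by (auto simp: mat_mult_def mat_scale_def fun_eq_iff sum_distrib_left mult.left_commute)

lemmas mat_mult_distribs =
  mat_mult_add_left mat_mult_add_right mat_mult_scale_left mat_mult_scale_right

lemma mat_trace_add: "mat_trace (mat_add A B) = mat_trace A + mat_trace B"
  by (simp add: mat_trace_def mat_add_def sum.distrib)

lemma mat_trace_scale: "mat_trace (mat_scale c A) = c * mat_trace A"
  by (simp add: mat_trace_def mat_scale_def sum_distrib_left)

lemma mat_trace_id: "mat_trace mat_id = of_nat n"
  by (simp add: mat_trace_def mat_id_def)

lemma mat_trace_mult_commute: "mat_trace (mat_mult A B) = mat_trace (mat_mult B A)"
  unfolding mat_trace_def mat_mult_def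
  by (simp cong: sum.cong_simp) (subst sum.swap, simp add: mult.commute)

lemma mat_adj_mult: "mat_adj (mat_mult A B) = mat_mult (mat_adj B) (mat_adj A)"
  by (auto simp: mat_adj_def mat_mult_def fun_eq_iff mult.commute)

lemma mat_adj_add: "mat_adj (mat_add A B) = mat_add (mat_adj A) (mat_adj B)"
  by (simp add: mat_adj_def mat_add_def fun_eq_iff)

lemma mat_adj_scale: "mat_adj (mat_scale c A) = mat_scale (cnj c) (mat_adj A)"
  by (simp add: mat_adj_def mat_scale_def fun_eq_iff)

lemma hermitian_id [simp]: "hermitian mat_id"
  by (simp add: hermitian_def) (auto simp: mat_adj_def mat_id_def fun_eq_iff if_distrib[of cnj])

lemma hermitian_add: "hermitian A \<Longrightarrow> hermitian B \<Longrightarrow> hermitian (mat_add A B)"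
  by (simp add: hermitian_def mat_adj_add)

lemma hermitian_scale: "hermitian A \<Longrightarrow> c \<in> \<real> \<Longrightarrow> hermitian (mat_scale c A)"
  by (auto simp: hermitian_def mat_adj_scale Reals_cnj_iff)

lemma hermitian_outer_prod: "hermitian (outer_prod y y)"
  by (simp add: hermitian_def) (auto simp: mat_adj_def outer_prod_def fun_eq_iff mult.commute)

lemma cinner_cnj: "cnj (cinner x y) = cinner y x"
  by (simp add: cinner_def mult.commute)

lemma cinner_cong:
  "(\<And>i. i < n \<Longrightarrow> x i = x' i) \<Longrightarrow> (\<And>i. i < n \<Longrightarrow> y i = y' i) \<Longrightarrow> cinner x y = cinner x' y'"
  by (simp add: cinner_def)

lemma cinner_self: "cinner y y = of_real (\<Sum>i<n. (cmod (y i))\<^sup>2)"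
  unfolding cinner_def of_real_sum
  by (rule sum.cong) (auto simp: complex_norm_square mult.commute simp del: of_real_power)

lemma cinner_self_nonneg: "Re (cinner y y) \<ge> 0"
  by (simp add: cinner_self sum_nonneg)

lemma cinner_self_pos: "nonzero_vec y \<Longrightarrow> Re (cinner y y) > 0"
  unfolding nonzero_vec_def cinner_self Re_complex_of_real
  by (elim exE conjE, rule sum_pos2) auto

lemma cinner_add_right: "cinner x (\<lambda>i. y i + z i) = cinner x y + cinner x z"
  by (simp add: cinner_def distrib_left sum.distrib)

lemma cinner_scale_right: "cinner x (\<lambda>i. c * y i) = c * cinner x y"
  by (simp add: cinner_def sum_distrib_left mult.left_commute)

lemma cinner_mat_vec_adj: "cinner x (mat_vec A y) = cinner (mat_vec (mat_adj A) x) y"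
proof -
  have "cinner x (mat_vec A y) = (\<Sum>j<n. \<Sum>i<n. cnj (x i) * A i j * y j)"
    by (subst sum.swap) (simp add: cinner_def mat_vec_def sum_distrib_left mult.assoc)
  also have "\<dots> = cinner (mat_vec (mat_adj A) x) y"
    by (simp add: cinner_def mat_vec_def mat_adj_def sum_distrib_left mult_ac)
  finally show ?thesis .
qed

lemma mat_vec_mult: "is_mat A \<Longrightarrow> mat_vec (mat_mult A B) y = mat_vec A (mat_vec B y)"
proof (intro ext)
  fix i assume A: "is_mat A"
  show "mat_vec (mat_mult A B) y i = mat_vec A (mat_vec B y) i"
  proof (cases "i < n")
    case True
    have "mat_vec (mat_mult A B) y i = (\<Sum>k<n. \<Sum>j<n. A i k * B k j * y j)"
      using True by (subst sum.swap) (simp add: mat_vec_def mat_mult_def sum_distrib_right)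
    also have "\<dots> = mat_vec A (mat_vec B y) i"
      by (simp add: mat_vec_def sum_distrib_left mult.assoc)
    finally show ?thesis .
  qed (use A in \<open>simp add: mat_vec_def mat_mult_def is_mat_def\<close>)
qed

lemma mat_vec_id: "i < n \<Longrightarrow> mat_vec mat_id y i = y i"
  by (simp add: mat_vec_def mat_id_def times_if_distrib cong: if_cong)

lemma mat_vec_add: "mat_vec (mat_add A B) y = (\<lambda>i. mat_vec A y i + mat_vec B y i)"
  by (simp add: mat_vec_def mat_add_def distrib_right sum.distrib)

lemma mat_vec_scale: "mat_vec (mat_scale c A) y = (\<lambda>i. c * mat_vec A y i)"
  by (simp add: mat_vec_def mat_scale_def sum_distrib_left mult.assoc)

lemma qform_cong: "(\<And>i. i < n \<Longrightarrow> x i = x' i) \<Longrightarrow> qform A x = qform A x'"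
  unfolding qform_def by (rule cinner_cong) (auto simp: mat_vec_def)

lemma qform_add: "qform (mat_add A B) y = qform A y + qform B y"
  by (simp add: qform_def mat_vec_add cinner_add_right)

lemma qform_scale: "qform (mat_scale c A) y = c * qform A y"
  by (simp add: qform_def mat_vec_scale cinner_scale_right)

lemma qform_id: "qform mat_id y = cinner y y"
  unfolding qform_def by (rule cinner_cong) (auto simp: mat_vec_id)

lemma qform_outer_prod: "qform (outer_prod a b) y = cinner y a * cinner b y"
proof -
  have "qform (outer_prod a b) y = (\<Sum>i<n. \<Sum>j<n. cnj (y i) * a i * (cnj (b j) * y j))"
    by (simp add: qform_def cinner_def mat_vec_def outer_prod_def sum_distrib_left mult.assoc)
  then show ?thesis
    by (simp add: cinner_def sum_product)
qed

lemma qform_outer_prod_self: "qform (outer_prod y y) x = of_real ((cmod (cinner x y))\<^sup>2)"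
  by (simp only: qform_outer_prod flip: cinner_cnj[of x y])
    (simp add: complex_norm_square mult.commute del: of_real_power)

lemma qform_mult: "is_mat A \<Longrightarrow> qform (mat_mult A B) y = cinner (mat_vec (mat_adj A) y) (mat_vec B y)"
  by (simp add: qform_def mat_vec_mult cinner_mat_vec_adj)

lemma qform_expand: "qform Z y = (\<Sum>i<n. \<Sum>j<n. Z i j * (y j * cnj (y i)))"
  by (simp add: qform_def cinner_def mat_vec_def sum_distrib_left mult_ac)

lemma qform_unit_vec: "i < n \<Longrightarrow> qform Y (\<lambda>k. if k = i then 1 else 0) = Y i i"
  by (simp add: qform_def cinner_def mat_vec_def times_if_distrib if_distrib[of cnj] cong: if_cong)

lemma qform_hermitian_real: "hermitian A \<Longrightarrow> qform A y = of_real (Re (qform A y))"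
proof -
  assume "hermitian A"
  then have "cnj (qform A y) = qform A y"
    unfolding qform_def hermitian_def by (metis cinner_cnj cinner_mat_vec_adj)
  then show ?thesis
    by (simp add: complex_eq_iff)
qed

lemma mat_trace_outer_prod: "mat_trace (outer_prod a b) = cinner b a"
  by (simp add: mat_trace_def outer_prod_def cinner_def mult.commute)

lemma mat_mult_outer_prod_right: "mat_mult A (outer_prod a b) = outer_prod (mat_vec A a) b"
  by (auto simp: mat_mult_def outer_prod_def mat_vec_def fun_eq_iff sum_distrib_right mult.assoc)

lemma mat_mult_outer_prod_left: "mat_mult (outer_prod a b) A = outer_prod a (mat_vec (mat_adj A) b)"
  by (auto simp: mat_mult_def outer_prod_def mat_vec_def mat_adj_def fun_eq_iff sum_distrib_left mult_ac)

lemma mat_mult_outer_prod_outer_prod: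
  "mat_mult (outer_prod a b) (outer_prod c d) = mat_scale (cinner b c) (outer_prod a d)"
  by (auto simp: mat_mult_def outer_prod_def mat_scale_def cinner_def fun_eq_iff
      sum_distrib_left sum_distrib_right mult_ac)

lemma mat_inv_exists:
  assumes inj: "\<And>y. \<forall>i<n. mat_vec A y i = 0 \<Longrightarrow> \<not> nonzero_vec y"
  shows "\<exists>X. is_mat X \<and> mat_mult A X = mat_id \<and> mat_mult X A = mat_id"
proof -
  define M where "M = Matrix.mat n n (\<lambda>(i, j). A i j)"
  have M: "M \<in> carrier_mat n n"
    by (simp add: M_def)
  have "det M \<noteq> 0"
  proof
    assume "det M = 0"
    then obtain v where v: "v \<in> carrier_vec n" "v \<noteq> 0\<^sub>v n" "M *\<^sub>v v = 0\<^sub>v n"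
      using det_0_iff_vec_prod_zero_field[OF M] by auto
    define y where "y = (\<lambda>i. if i < n then vec_index v i else 0)"
    have "mat_vec A y i = vec_index (M *\<^sub>v v) i" if "i < n" for i
      using that v(1) by (simp add: M_def y_def mat_vec_def scalar_prod_def atLeast0LessThan)
    then have "\<forall>i<n. mat_vec A y i = 0"
      using v(3) by simp
    moreover have "nonzero_vec y"
      using v(1,2) by (auto simp: nonzero_vec_def y_def vec_eq_iff)
    ultimately show False
      using inj by blast
  qed
  then have "M \<in> Units (ring_mat TYPE(complex) n ())"
    by (rule det_non_zero_imp_unit[OF M])
  then obtain B where B: "B \<in> carrier_mat n n" "B * M = 1\<^sub>m n" "M * B = 1\<^sub>m n"
    unfolding Units_def ring_mat_def by auto
  define X where "X = (\<lambda>i j. if i < n \<and> j < n then B $$ (i, j) else 0)"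
  have "mat_mult A X i j = (M * B) $$ (i, j)" "mat_mult X A i j = (B * M) $$ (i, j)"
    if "i < n" "j < n" for i j
    using that B(1) by (simp_all add: M_def X_def mat_mult_def scalar_prod_def atLeast0LessThan)
  then have "mat_mult A X = mat_id" "mat_mult X A = mat_id"
    using B(2,3) by (auto simp: fun_eq_iff mat_id_def mat_mult_def)
  moreover have "is_mat X"
    by (simp add: is_mat_def X_def)
  ultimately show ?thesis
    by blast
qed

lemma qform_zero: "\<not> nonzero_vec y \<Longrightarrow> qform A y = 0"
  by (simp add: qform_def cinner_def nonzero_vec_def)

lemma pos_def_qform_nonneg: "pos_def A \<Longrightarrow> Re (qform A y) \<ge> 0"
  by (cases "nonzero_vec y") (auto simp: pos_def_def qform_zero less_imp_le)

lemma pos_def_kernel: "pos_def A \<Longrightarrow> \<forall>i<n. mat_vec A y i = 0 \<Longrightarrow> \<not> nonzero_vec y"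
  by (auto simp: pos_def_def qform_def cinner_def)

lemma pos_def_mat_inv:
  assumes "pos_def A"
  shows "is_mat (mat_inv A)" "mat_mult A (mat_inv A) = mat_id" "mat_mult (mat_inv A) A = mat_id"
proof -
  have "\<exists>X. is_mat X \<and> mat_mult A X = mat_id \<and> mat_mult X A = mat_id"
    by (rule mat_inv_exists) (rule pos_def_kernel[OF assms])
  then have "is_mat (mat_inv A) \<and> mat_mult A (mat_inv A) = mat_id \<and> mat_mult (mat_inv A) A = mat_id"
    unfolding mat_inv_def by (rule someI_ex)
  then show "is_mat (mat_inv A)" "mat_mult A (mat_inv A) = mat_id" "mat_mult (mat_inv A) A = mat_id"
    by blast+
qed

lemma mat_inv_unique:
  assumes "pos_def A" "is_mat X" "mat_mult A X = mat_id"
  shows "mat_inv A = X"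
proof -
  have "mat_inv A = mat_mult (mat_inv A) (mat_mult A X)"
    using assms(3) pos_def_mat_inv(1)[OF assms(1)] by (simp add: mat_mult_id_right)
  also have "\<dots> = X"
    using pos_def_mat_inv(3)[OF assms(1)] assms(2) by (simp add: mat_mult_assoc[symmetric] mat_mult_id_left)
  finally show ?thesis .
qed

lemma pos_def_is_mat: "pos_def A \<Longrightarrow> is_mat A"
  and pos_def_adj: "pos_def A \<Longrightarrow> mat_adj A = A"
  by (simp_all add: pos_def_def hermitian_def)

lemma hermitian_mat_inv:
  assumes "pos_def A"
  shows "hermitian (mat_inv A)"
proof -
  have "mat_mult A (mat_adj (mat_inv A)) = mat_adj (mat_mult (mat_inv A) A)"
    using assms by (simp add: mat_adj_mult pos_def_adj)
  also have "\<dots> = mat_id"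
    using pos_def_mat_inv[OF assms] by (simp add: mat_adj_def mat_id_def fun_eq_iff)
  finally have "mat_inv A = mat_adj (mat_inv A)"
    using pos_def_mat_inv(1)[OF assms]
    by (intro mat_inv_unique assms) (auto simp: is_mat_def mat_adj_def)
  then show ?thesis
    using pos_def_mat_inv(1)[OF assms] by (simp add: hermitian_def)
qed

lemma mat_vec_mat_inv_right: "pos_def A \<Longrightarrow> i < n \<Longrightarrow> mat_vec A (mat_vec (mat_inv A) y) i = y i"
  by (simp add: mat_vec_mult[symmetric] pos_def_is_mat pos_def_mat_inv mat_vec_id)

lemma mat_vec_mat_inv_left: "pos_def A \<Longrightarrow> i < n \<Longrightarrow> mat_vec (mat_inv A) (mat_vec A y) i = y i"
  by (simp add: mat_vec_mult[symmetric] pos_def_mat_inv mat_vec_id)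

lemma qform_mat_inv:
  assumes "pos_def A"
  shows "qform (mat_inv A) y = qform A (mat_vec (mat_inv A) y)"
proof -
  let ?z = "mat_vec (mat_inv A) y"
  have "qform (mat_inv A) y = cinner (mat_vec A ?z) ?z"
    unfolding qform_def by (rule cinner_cong) (auto simp: mat_vec_mat_inv_right assms)
  also have "\<dots> = qform A ?z"
    using assms by (simp add: qform_def cinner_mat_vec_adj pos_def_adj)
  finally show ?thesis .
qed

lemma pos_def_inv:
  assumes "pos_def A"
  shows "pos_def (mat_inv A)"
  unfolding pos_def_def
proof (intro conjI allI impI)
  show "hermitian (mat_inv A)"
    by (rule hermitian_mat_inv[OF assms])
  fix y assume "nonzero_vec y"
  have "nonzero_vec (mat_vec (mat_inv A) y)"
  proof (rule ccontr)
    assume "\<not> nonzero_vec (mat_vec (mat_inv A) y)"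
    then have "\<forall>i<n. mat_vec A (mat_vec (mat_inv A) y) i = 0"
      by (auto simp: nonzero_vec_def mat_vec_def intro!: sum.neutral)
    with \<open>nonzero_vec y\<close> show False
      by (auto simp: nonzero_vec_def mat_vec_mat_inv_right assms)
  qed
  then show "Re (qform (mat_inv A) y) > 0"
    using assms by (simp add: qform_mat_inv pos_def_def)
qed

lemma qform_diff:
  assumes "hermitian A"
  shows "Re (qform A (\<lambda>i. x i - l * y i)) =
    Re (qform A x) - 2 * Re (l * cinner x (mat_vec A y)) + (cmod l)\<^sup>2 * Re (qform A y)"
proof -
  have mat_vec_diff: "mat_vec A (\<lambda>i. x i - l * y i) = (\<lambda>i. mat_vec A x i - l * mat_vec A y i)"
    by (simp add: mat_vec_def sum_subtractf sum_distrib_left right_diff_distrib mult.left_commute)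
  have cinner_diff_left: "cinner (\<lambda>i. x i - l * y i) w = cinner x w - cnj l * cinner y w" for w
    by (simp add: cinner_def sum_subtractf sum_distrib_left algebra_simps)
  have cinner_diff_right: "cinner w (\<lambda>i. v i - l * v' i) = cinner w v - l * cinner w v'" for w v v'
    by (simp add: cinner_def sum_subtractf sum_distrib_left right_diff_distrib mult.left_commute)
  have "cinner y (mat_vec A x) = cnj (cinner x (mat_vec A y))"
    using assms by (metis cinner_cnj cinner_mat_vec_adj hermitian_def)
  then have "qform A (\<lambda>i. x i - l * y i) = qform A x - l * cinner x (mat_vec A y)
      - cnj l * cnj (cinner x (mat_vec A y)) + cnj l * l * qform A y"
    unfolding qform_def mat_vec_diff cinner_diff_left cinner_diff_right by (simp add: algebra_simps)
  moreover have "Re (cnj l * l * qform A y) = (cmod l)\<^sup>2 * Re (qform A y)"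
    by (simp add: complex_norm_square[symmetric] mult.commute)
  ultimately show ?thesis
    by simp
qed

lemma pos_def_cauchy_schwarz:
  assumes "pos_def A"
  shows "(cmod (cinner x (mat_vec A y)))\<^sup>2 \<le> Re (qform A x) * Re (qform A y)"
proof (rule cmod_sq_le_of_quadratic_nonneg)
  fix l :: complex
  show "0 \<le> Re (qform A x) - 2 * Re (l * cinner x (mat_vec A y)) + (cmod l)\<^sup>2 * Re (qform A y)"
    using pos_def_qform_nonneg[OF assms, of "\<lambda>i. x i - l * y i"] assms
    by (simp add: qform_diff pos_def_def)
qed (rule pos_def_qform_nonneg[OF assms])

lemma cinner_sq_le_qform_inv:
  assumes "pos_def M"
  shows "(cmod (cinner x y))\<^sup>2 \<le> Re (qform M x) * Re (qform (mat_inv M) y)"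
proof -
  let ?z = "mat_vec (mat_inv M) y"
  have "cinner x (mat_vec M ?z) = cinner x y"
    by (rule cinner_cong) (auto simp: mat_vec_mat_inv_right assms)
  then show ?thesis
    using pos_def_cauchy_schwarz[OF assms, of x ?z] by (simp add: qform_mat_inv assms)
qed

lemma pos_def_diag_pos: "pos_def Y \<Longrightarrow> i < n \<Longrightarrow> Re (Y i i) > 0"
  by (auto simp: pos_def_def nonzero_vec_def qform_unit_vec[symmetric])

lemma pos_def_trace_pos: "pos_def Y \<Longrightarrow> 0 < n \<Longrightarrow> Re (mat_trace Y) > 0"
  unfolding mat_trace_def Re_sum by (rule sum_pos) (auto simp: pos_def_diag_pos)

lemma mat_trace_congruence:
  assumes "hermitian Z"
  shows "mat_trace (mat_mult Z (mat_mult Y Z)) = (\<Sum>j<n. qform Y (\<lambda>k. Z k j))"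
proof -
  have "cnj (Z k j) = Z j k" for j k
    using assms unfolding hermitian_def mat_adj_def by metis
  then show ?thesis
    by (simp add: mat_trace_def mat_mult_def qform_def cinner_def mat_vec_def cong: sum.cong_simp)
qed

lemma mat_trace_congruence_nonneg:
  "hermitian Z \<Longrightarrow> pos_def Y \<Longrightarrow> Re (mat_trace (mat_mult Z (mat_mult Y Z))) \<ge> 0"
  by (simp add: mat_trace_congruence sum_nonneg pos_def_qform_nonneg)

lemma mat_trace_inv_sq_pos:
  assumes "pos_def M" "0 < n"
  shows "Re (mat_trace (mat_mult (mat_inv M) (mat_inv M))) > 0"
proof -
  let ?X = "mat_inv M"
  have "hermitian ?X" "pos_def ?X"
    by (simp_all add: hermitian_mat_inv pos_def_inv assms(1))
  then have "Re (mat_trace (mat_mult ?X ?X)) = (\<Sum>j<n. Re (cinner (\<lambda>k. ?X k j) (\<lambda>k. ?X k j)))"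
    using mat_trace_congruence[of ?X mat_id]
    by (simp add: mat_mult_id_left hermitian_def qform_id)
  also have "\<dots> > 0"
  proof (rule sum_pos2)
    have "nonzero_vec (\<lambda>k. ?X k 0)"
      using pos_def_diag_pos[OF \<open>pos_def ?X\<close> assms(2)] assms(2) by (auto simp: nonzero_vec_def)
    then show "0 < Re (cinner (\<lambda>k. ?X k 0) (\<lambda>k. ?X k 0))"
      by (rule cinner_self_pos)
  qed (use assms(2) cinner_self_nonneg in auto)
  finally show ?thesis .
qed

lemma mat_trace_cauchy_schwarz:
  assumes "hermitian X" "pos_def Y" "0 < n"
  shows "(Re (mat_trace (mat_mult X Y)))\<^sup>2 \<le> Re (mat_trace (mat_mult X (mat_mult Y X))) * Re (mat_trace Y)"
proof (rule sq_le_of_quadratic_nonneg)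
  fix l :: real
  define Z where "Z = mat_add X (mat_scale (of_real (- l)) mat_id)"
  have "hermitian Z"
    unfolding Z_def by (intro hermitian_add hermitian_scale assms(1) hermitian_id) auto
  have "is_mat X" "is_mat Y"
    using assms(1,2) by (simp_all add: hermitian_def pos_def_is_mat)
  have "0 \<le> Re (mat_trace (mat_mult Z (mat_mult Y Z)))"
    by (rule mat_trace_congruence_nonneg[OF \<open>hermitian Z\<close> assms(2)])
  also have "mat_trace (mat_mult Z (mat_mult Y Z)) = mat_trace (mat_mult X (mat_mult Y X))
      - of_real l * mat_trace (mat_mult X Y) - of_real l * mat_trace (mat_mult Y X)
      + of_real l * of_real l * mat_trace Y"
    unfolding Z_def using \<open>is_mat X\<close> \<open>is_mat Y\<close>
    by (simp add: mat_mult_distribs mat_mult_id_left mat_mult_id_right mat_trace_add mat_trace_scale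
        algebra_simps)
  also have "mat_trace (mat_mult Y X) = mat_trace (mat_mult X Y)"
    by (rule mat_trace_mult_commute)
  finally show "0 \<le> Re (mat_trace (mat_mult X (mat_mult Y X))) - 2 * l * Re (mat_trace (mat_mult X Y))
      + l\<^sup>2 * Re (mat_trace Y)"
    by (simp add: power2_eq_square algebra_simps)
qed (rule pos_def_trace_pos[OF assms(2,3)])

definition mat_shift :: "real \<Rightarrow> cmat \<Rightarrow> cmat" where
  "mat_shift \<delta> A = mat_add A (mat_scale (of_real \<delta>) mat_id)"

definition inv_trace :: "cmat \<Rightarrow> real" where
  "inv_trace A = Re (mat_trace (mat_inv A))"

definition inv_sq_trace :: "cmat \<Rightarrow> real" where
  "inv_sq_trace A = Re (mat_trace (mat_mult (mat_inv A) (mat_inv A)))"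

lemma mat_shift_shift: "mat_shift \<delta> (mat_shift \<delta>' A) = mat_shift (\<delta>' + \<delta>) A"
  by (auto simp: mat_shift_def mat_add_def mat_scale_def algebra_simps)

lemma hermitian_shift: "hermitian A \<Longrightarrow> hermitian (mat_shift \<delta> A)"
  unfolding mat_shift_def by (intro hermitian_add hermitian_scale hermitian_id) auto

lemma qform_shift: "Re (qform (mat_shift \<delta> A) x) = Re (qform A x) + \<delta> * Re (cinner x x)"
  by (simp add: mat_shift_def qform_add qform_scale qform_id)

lemma pos_def_shift:
  assumes "pos_def M" "\<delta> \<ge> 0"
  shows "pos_def (mat_shift \<delta> M)"
  using assms unfolding pos_def_def
  by (auto simp: hermitian_shift qform_shift intro!: add_pos_nonneg mult_nonneg_nonneg cinner_self_nonneg)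

lemma pos_def_rank_one_update:
  assumes "pos_def M" and q: "1 + c * Re (qform (mat_inv M) y) > 0"
  shows "pos_def (mat_add M (mat_scale (of_real c) (outer_prod y y)))"
  unfolding pos_def_def
proof (intro conjI allI impI)
  show "hermitian (mat_add M (mat_scale (of_real c) (outer_prod y y)))"
    using assms(1) by (intro hermitian_add hermitian_scale hermitian_outer_prod) (auto simp: pos_def_def)
  fix x assume "nonzero_vec x"
  let ?q = "Re (qform (mat_inv M) y)"
  have qx: "Re (qform M x) > 0"
    using assms(1) \<open>nonzero_vec x\<close> by (simp add: pos_def_def)
  have "Re (qform (mat_add M (mat_scale (of_real c) (outer_prod y y))) x)
      = Re (qform M x) + c * (cmod (cinner x y))\<^sup>2"
    by (simp add: qform_add qform_scale qform_outer_prod_self del: of_real_power)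
  moreover have "Re (qform M x) + c * (cmod (cinner x y))\<^sup>2 > 0"
  proof (cases "c \<ge> 0")
    case False
    have "c * (Re (qform M x) * ?q) \<le> c * (cmod (cinner x y))\<^sup>2"
      using cinner_sq_le_qform_inv[OF assms(1), of x y] False by (simp add: mult_le_cancel_left)
    moreover have "Re (qform M x) * (1 + c * ?q) > 0"
      using qx q by simp
    ultimately show ?thesis
      by (simp add: algebra_simps)
  qed (use qx in \<open>simp add: add_pos_nonneg\<close>)
  ultimately show "Re (qform (mat_add M (mat_scale (of_real c) (outer_prod y y))) x) > 0"
    by simp
qed

lemma sherman_morrison:
  assumes M: "pos_def M" and q: "1 + c * Re (qform (mat_inv M) y) > 0"
  defines "z \<equiv> mat_vec (mat_inv M) y" and "k \<equiv> c / (1 + c * Re (qform (mat_inv M) y))"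
  shows "mat_inv (mat_add M (mat_scale (of_real c) (outer_prod y y))) =
    mat_add (mat_inv M) (mat_scale (- of_real k) (outer_prod z z))"
    (is "_ = ?Z")
proof (rule mat_inv_unique)
  let ?X = "mat_inv M" and ?P = "outer_prod y y" and ?R = "outer_prod y z"
  let ?q = "Re (qform ?X y)"
  have X: "is_mat ?X" "mat_adj ?X = ?X"
    using hermitian_mat_inv[OF M] by (auto simp: hermitian_def)
  have "cinner y z = of_real ?q"
    using qform_hermitian_real[OF hermitian_mat_inv[OF M], of y] by (simp add: qform_def z_def)
  then have PZ: "mat_mult ?P (outer_prod z z) = mat_scale (of_real ?q) ?R"
    by (simp add: mat_mult_outer_prod_outer_prod)
  have MZ: "mat_mult M (outer_prod z z) = ?R"
    unfolding mat_mult_outer_prod_right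
    by (auto simp: outer_prod_def fun_eq_iff z_def mat_vec_mat_inv_right[OF M])
  have PX: "mat_mult ?P ?X = ?R"
    by (simp add: mat_mult_outer_prod_left X z_def)
  have "c - k - k * c * ?q = 0"
    using q by (simp add: k_def field_simps)
  then have coeff: "(of_real c - of_real k - of_real k * (of_real c * of_real ?q) :: complex) = 0"
    by (metis mult.assoc of_real_0 of_real_diff of_real_mult)
  have "mat_mult (mat_add M (mat_scale (of_real c) ?P)) ?Z
      = mat_add mat_id (mat_scale (of_real c - of_real k - of_real k * (of_real c * of_real ?q)) ?R)"
    by (simp add: mat_mult_distribs pos_def_mat_inv(2)[OF M] MZ PX PZ)
      (simp add: mat_add_def mat_scale_def fun_eq_iff algebra_simps)
  also have "\<dots> = mat_id"
    by (simp add: coeff mat_add_def mat_scale_def)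
  finally show "mat_mult (mat_add M (mat_scale (of_real c) ?P)) ?Z = mat_id" .
  show "pos_def (mat_add M (mat_scale (of_real c) ?P))"
    by (rule pos_def_rank_one_update[OF M q])
  show "is_mat ?Z"
    using X by simp
qed

lemma inv_trace_rank_one_update:
  assumes M: "pos_def M" and q: "1 + c * Re (qform (mat_inv M) y) > 0"
  shows "inv_trace (mat_add M (mat_scale (of_real c) (outer_prod y y))) =
    inv_trace M - c * Re (qform (mat_mult (mat_inv M) (mat_inv M)) y) / (1 + c * Re (qform (mat_inv M) y))"
proof -
  have "qform (mat_mult (mat_inv M) (mat_inv M)) y = cinner (mat_vec (mat_inv M) y) (mat_vec (mat_inv M) y)"
    using hermitian_mat_inv[OF M] by (simp add: qform_mult hermitian_def)
  then show ?thesis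
    by (simp add: sherman_morrison[OF M q] inv_trace_def mat_trace_add mat_trace_scale mat_trace_outer_prod)
qed

lemma mat_inv_shift_resolvent:
  assumes A: "pos_def A" and B: "pos_def (mat_shift \<delta> A)"
  defines "X \<equiv> mat_inv (mat_shift \<delta> A)"
  shows "mat_inv A = mat_add X (mat_scale (of_real \<delta>) (mat_mult (mat_inv A) X))"
    and "mat_inv A = mat_add X (mat_scale (of_real \<delta>) (mat_mult X (mat_inv A)))"
proof -
  let ?Y = "mat_inv A"
  have X: "is_mat X" "mat_mult (mat_shift \<delta> A) X = mat_id" "mat_mult X (mat_shift \<delta> A) = mat_id"
    using pos_def_mat_inv[OF B] by (simp_all add: X_def)
  have Y: "is_mat ?Y" "mat_mult A ?Y = mat_id" "mat_mult ?Y A = mat_id"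
    using pos_def_mat_inv[OF A] by simp_all
  have "?Y = mat_mult (mat_mult ?Y (mat_shift \<delta> A)) X"
    using X(2) Y(1) by (simp add: mat_mult_assoc mat_mult_id_right)
  also have "\<dots> = mat_add X (mat_scale (of_real \<delta>) (mat_mult ?Y X))"
    using X(1) Y(1,3)
    by (simp add: mat_shift_def mat_mult_distribs mat_mult_id_left mat_mult_id_right)
  finally show "?Y = mat_add X (mat_scale (of_real \<delta>) (mat_mult ?Y X))" .
  have "?Y = mat_mult X (mat_mult (mat_shift \<delta> A) ?Y)"
    using X(3) Y(1) by (simp add: mat_mult_assoc[symmetric] mat_mult_id_left)
  also have "\<dots> = mat_add X (mat_scale (of_real \<delta>) (mat_mult X ?Y))"
    using X(1) Y(1,2)
    by (simp add: mat_shift_def mat_mult_distribs mat_mult_id_left mat_mult_id_right)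
  finally show "?Y = mat_add X (mat_scale (of_real \<delta>) (mat_mult X ?Y))" .
qed

lemma inv_trace_shift_identities:
  assumes A: "pos_def A" and B: "pos_def (mat_shift \<delta> A)"
  defines "Y \<equiv> mat_inv A" and "X \<equiv> mat_inv (mat_shift \<delta> A)"
  shows "inv_trace A - inv_trace (mat_shift \<delta> A) = \<delta> * Re (mat_trace (mat_mult Y X))"
    and "Re (mat_trace (mat_mult Y X)) = inv_sq_trace (mat_shift \<delta> A) + \<delta> * Re (mat_trace (mat_mult X (mat_mult Y X)))"
    and "inv_sq_trace A = Re (mat_trace (mat_mult Y X)) + \<delta> * Re (mat_trace (mat_mult Y (mat_mult X Y)))"
proof -
  note resolvent = mat_inv_shift_resolvent[OF A B, folded X_def Y_def]
  have trace: "Re (mat_trace Z) = Re (mat_trace Z')" if "Z = Z'" for Z Z'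
    using that by simp
  show "inv_trace A - inv_trace (mat_shift \<delta> A) = \<delta> * Re (mat_trace (mat_mult Y X))"
    using trace[OF resolvent(1)] by (simp add: inv_trace_def X_def Y_def mat_trace_add mat_trace_scale)
  have "mat_mult Y X = mat_mult (mat_add X (mat_scale (of_real \<delta>) (mat_mult X Y))) X"
    by (rule arg_cong[where f = "\<lambda>Z. mat_mult Z X", OF resolvent(2)])
  also have "\<dots> = mat_add (mat_mult X X) (mat_scale (of_real \<delta>) (mat_mult X (mat_mult Y X)))"
    by (simp add: mat_mult_distribs mat_mult_assoc)
  finally show "Re (mat_trace (mat_mult Y X))
      = inv_sq_trace (mat_shift \<delta> A) + \<delta> * Re (mat_trace (mat_mult X (mat_mult Y X)))"
    by (auto dest: arg_cong[of _ _ "\<lambda>A. Re (mat_trace A)"]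
        simp: inv_sq_trace_def X_def mat_trace_add mat_trace_scale)
  have "mat_mult Y Y = mat_mult Y (mat_add X (mat_scale (of_real \<delta>) (mat_mult Y X)))"
    by (rule arg_cong[where f = "mat_mult Y", OF resolvent(1)])
  moreover have "mat_trace (mat_mult Y (mat_mult Y X)) = mat_trace (mat_mult Y (mat_mult X Y))"
    by (metis mat_trace_mult_commute mat_mult_assoc)
  ultimately show "inv_sq_trace A = Re (mat_trace (mat_mult Y X)) + \<delta> * Re (mat_trace (mat_mult Y (mat_mult X Y)))"
    using trace by (simp add: inv_sq_trace_def Y_def mat_mult_distribs mat_trace_add mat_trace_scale)
qed

lemma inv_trace_shift_up:
  assumes M: "pos_def M" and "\<delta> > 0" "0 < n"
  shows "inv_trace (mat_shift \<delta> M) < inv_trace M"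
    and "\<delta> * inv_sq_trace (mat_shift \<delta> M) \<le> inv_trace M - inv_trace (mat_shift \<delta> M)"
proof -
  let ?X = "mat_inv (mat_shift \<delta> M)" and ?Y = "mat_inv M"
  have M': "pos_def (mat_shift \<delta> M)"
    using pos_def_shift[OF M] \<open>\<delta> > 0\<close> by simp
  note identities = inv_trace_shift_identities[OF M M']
  have "Re (mat_trace (mat_mult ?X (mat_mult ?Y ?X))) \<ge> 0"
    by (intro mat_trace_congruence_nonneg hermitian_mat_inv pos_def_inv M M')
  then have "inv_sq_trace (mat_shift \<delta> M) \<le> Re (mat_trace (mat_mult ?Y ?X))"
    using identities(2) \<open>\<delta> > 0\<close> by simp
  moreover have "inv_sq_trace (mat_shift \<delta> M) > 0"
    unfolding inv_sq_trace_def by (rule mat_trace_inv_sq_pos[OF M' \<open>0 < n\<close>])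
  ultimately have "0 < \<delta> * Re (mat_trace (mat_mult ?Y ?X))"
    and "\<delta> * inv_sq_trace (mat_shift \<delta> M) \<le> \<delta> * Re (mat_trace (mat_mult ?Y ?X))"
    using \<open>\<delta> > 0\<close> by simp_all
  then show "inv_trace (mat_shift \<delta> M) < inv_trace M"
    and "\<delta> * inv_sq_trace (mat_shift \<delta> M) \<le> inv_trace M - inv_trace (mat_shift \<delta> M)"
    using identities(1) by linarith+
qed

lemma cinner_self_le_inv_trace_qform:
  assumes N: "pos_def N"
  shows "Re (cinner x x) \<le> inv_trace N * Re (qform N x)"
proof -
  let ?Y = "mat_inv N" and ?z = "mat_vec N x"
  have x: "mat_vec ?Y ?z i = x i" if "i < n" for i
    using that by (rule mat_vec_mat_inv_left[OF N])
  have "Re (cinner x x) = (\<Sum>i<n. (cmod (mat_vec ?Y ?z i))\<^sup>2)"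
    by (simp add: cinner_self x)
  also have "\<dots> \<le> (\<Sum>i<n. Re (?Y i i) * Re (qform ?Y ?z))"
  proof (rule sum_mono)
    fix i assume "i \<in> {..<n}"
    let ?e = "\<lambda>k. if k = i then 1 else 0"
    have "cinner ?e (mat_vec ?Y ?z) = mat_vec ?Y ?z i"
      using \<open>i \<in> {..<n}\<close> by (simp add: cinner_def if_distrib[of cnj] times_if_distrib cong: if_cong)
    then show "(cmod (mat_vec ?Y ?z i))\<^sup>2 \<le> Re (?Y i i) * Re (qform ?Y ?z)"
      using pos_def_cauchy_schwarz[OF pos_def_inv[OF N], of ?e ?z] qform_unit_vec[of i ?Y]
        \<open>i \<in> {..<n}\<close> by simp
  qed
  also have "qform ?Y ?z = qform N x"
    by (simp add: qform_mat_inv N x cong: qform_cong)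
  finally show ?thesis
    by (simp add: inv_trace_def mat_trace_def sum_distrib_right)
qed

lemma pos_def_shift_down:
  assumes N: "pos_def N" and "\<delta> \<ge> 0" "\<delta> * inv_trace N < 1"
  shows "pos_def (mat_shift (- \<delta>) N)"
  unfolding pos_def_def
proof (intro conjI allI impI)
  show "hermitian (mat_shift (- \<delta>) N)"
    using N by (simp add: hermitian_shift pos_def_def)
  fix x assume "nonzero_vec x"
  then have "Re (qform N x) > 0"
    using N by (simp add: pos_def_def)
  then have "\<delta> * (inv_trace N * Re (qform N x)) < Re (qform N x)"
    using assms(3) by (simp add: mult.assoc[symmetric])
  moreover have "\<delta> * Re (cinner x x) \<le> \<delta> * (inv_trace N * Re (qform N x))"
    using cinner_self_le_inv_trace_qform[OF N, of x] \<open>\<delta> \<ge> 0\<close> by (rule mult_left_mono)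
  ultimately show "Re (qform (mat_shift (- \<delta>) N) x) > 0"
    by (simp add: qform_shift)
qed

lemma inv_trace_shift_down:
  assumes N: "pos_def N" and "\<delta> > 0" "0 < n" and small: "\<delta> * inv_trace N < 1"
  shows "inv_trace N < inv_trace (mat_shift (- \<delta>) N)"
    and "1 / \<delta> - inv_trace N \<le> inv_sq_trace (mat_shift (- \<delta>) N)
      / (inv_trace (mat_shift (- \<delta>) N) - inv_trace N) - inv_trace (mat_shift (- \<delta>) N)"
proof -
  let ?N' = "mat_shift (- \<delta>) N"
  let ?Y = "mat_inv ?N'" and ?X = "mat_inv N"
  have N': "pos_def ?N'"
    using pos_def_shift_down[OF N _ small] \<open>\<delta> > 0\<close> by simp
  have "mat_shift \<delta> ?N' = N"
    by (simp add: mat_shift_shift) (simp add: mat_shift_def mat_add_def mat_scale_def)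
  with inv_trace_shift_identities[OF N', of \<delta>] N
  have identities: "inv_trace ?N' - inv_trace N = \<delta> * Re (mat_trace (mat_mult ?Y ?X))"
    "Re (mat_trace (mat_mult ?Y ?X)) = inv_sq_trace N + \<delta> * Re (mat_trace (mat_mult ?X (mat_mult ?Y ?X)))"
    "inv_sq_trace ?N' = Re (mat_trace (mat_mult ?Y ?X)) + \<delta> * Re (mat_trace (mat_mult ?Y (mat_mult ?X ?Y)))"
    by simp_all
  define a where "a = Re (mat_trace (mat_mult ?Y ?X))"
  define T where "T = Re (mat_trace (mat_mult ?Y (mat_mult ?X ?Y)))"
  have "Re (mat_trace (mat_mult ?X (mat_mult ?Y ?X))) \<ge> 0" "T \<ge> 0"
    unfolding T_def by (intro mat_trace_congruence_nonneg hermitian_mat_inv pos_def_inv N N')+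
  moreover have "inv_sq_trace N > 0"
    unfolding inv_sq_trace_def by (rule mat_trace_inv_sq_pos[OF N \<open>0 < n\<close>])
  ultimately have "a > 0"
    using identities(2) \<open>\<delta> > 0\<close> by (simp add: a_def add_pos_nonneg)
  have "a\<^sup>2 \<le> T * inv_trace N"
    unfolding a_def T_def inv_trace_def
    by (intro mat_trace_cauchy_schwarz hermitian_mat_inv pos_def_inv N N' \<open>0 < n\<close>)
  then have "1 / \<delta> - inv_trace N \<le> (a + \<delta> * T) / (\<delta> * a) - (inv_trace N + \<delta> * a)"
    using lower_barrier_arith \<open>a > 0\<close> \<open>\<delta> > 0\<close> \<open>T \<ge> 0\<close> small by blast
  then show "inv_trace N < inv_trace ?N'"
    and "1 / \<delta> - inv_trace N \<le> inv_sq_trace ?N' / (inv_trace ?N' - inv_trace N) - inv_trace ?N'"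
    using identities(1,3) \<open>a > 0\<close> \<open>\<delta> > 0\<close> by (simp_all add: a_def T_def diff_eq_eq)
qed

section \<open>The barrier method of Batson, Spielman and Srivastava\<close>

definition upper_gap :: "real \<Rightarrow> cmat \<Rightarrow> cmat" where
  "upper_gap u A = mat_add (mat_scale (of_real u) mat_id) (mat_scale (-1) A)"

definition lower_gap :: "real \<Rightarrow> cmat \<Rightarrow> cmat" where
  "lower_gap l A = mat_shift (- l) A"

text \<open>The quadratic forms of \<open>upper_test \<delta> u A\<close> and \<open>lower_test \<delta> l A\<close> are the functions \<open>U\<^sub>A\<close>
  and \<open>L\<^sub>A\<close> of Batson, Spielman and Srivastava (Twice-Ramanujan sparsifiers, Lemmas 3.3 and 3.4)
  for barrier shifts \<open>\<delta>\<close>.\<close>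

definition upper_test :: "real \<Rightarrow> real \<Rightarrow> cmat \<Rightarrow> cmat" where
  "upper_test \<delta> u A = (let X = mat_inv (upper_gap (u + \<delta>) A) in
     mat_add (mat_scale (of_real (1 / (inv_trace (upper_gap u A) - inv_trace (upper_gap (u + \<delta>) A))))
       (mat_mult X X)) X)"

definition lower_test :: "real \<Rightarrow> real \<Rightarrow> cmat \<Rightarrow> cmat" where
  "lower_test \<delta> l A = (let X = mat_inv (lower_gap (l + \<delta>) A) in
     mat_add (mat_scale (of_real (1 / (inv_trace (lower_gap (l + \<delta>) A) - inv_trace (lower_gap l A))))
       (mat_mult X X)) (mat_scale (-1) X))"

lemma upper_gap_shift: "upper_gap (u + \<delta>) A = mat_shift \<delta> (upper_gap u A)"
  by (auto simp: upper_gap_def mat_shift_def mat_add_def mat_scale_def fun_eq_iff algebra_simps)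

lemma lower_gap_shift: "lower_gap (l + \<delta>) A = mat_shift (- \<delta>) (lower_gap l A)"
  by (auto simp: lower_gap_def mat_shift_def mat_add_def mat_scale_def fun_eq_iff algebra_simps)

lemma upper_gap_rank_one:
  "upper_gap u (mat_add A (mat_scale (of_real t) P)) = mat_add (upper_gap u A) (mat_scale (of_real (- t)) P)"
  by (auto simp: upper_gap_def mat_add_def mat_scale_def fun_eq_iff algebra_simps)

lemma lower_gap_rank_one:
  "lower_gap l (mat_add A (mat_scale (of_real t) P)) = mat_add (lower_gap l A) (mat_scale (of_real t) P)"
  by (auto simp: lower_gap_def mat_shift_def mat_add_def mat_scale_def fun_eq_iff algebra_simps)

lemma qform_upper_gap: "Re (qform (upper_gap u A) y) = u * Re (cinner y y) - Re (qform A y)"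
  by (simp add: upper_gap_def qform_add qform_scale qform_id)

lemma qform_lower_gap: "Re (qform (lower_gap l A) y) = Re (qform A y) - l * Re (cinner y y)"
  by (simp add: lower_gap_def qform_shift)

lemma qform_sq_nonneg: "hermitian X \<Longrightarrow> Re (qform (mat_mult X X) y) \<ge> 0"
  by (simp add: hermitian_def qform_mult cinner_self_nonneg)

lemma trace_upper_test:
  assumes "pos_def (upper_gap u A)" "\<delta> > 0" "0 < n"
  shows "Re (mat_trace (upper_test \<delta> u A)) \<le> 1 / \<delta> + inv_trace (upper_gap u A)"
proof -
  note shift = inv_trace_shift_up[OF assms, folded upper_gap_shift]
  then have "inv_sq_trace (upper_gap (u + \<delta>) A)
      / (inv_trace (upper_gap u A) - inv_trace (upper_gap (u + \<delta>) A)) \<le> 1 / \<delta>"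
    using \<open>\<delta> > 0\<close> by (simp add: field_simps)
  then show ?thesis
    using shift(1)
    by (simp add: upper_test_def Let_def mat_trace_add mat_trace_scale inv_trace_def inv_sq_trace_def)
qed

lemma trace_lower_test:
  assumes "pos_def (lower_gap l A)" "\<delta> > 0" "0 < n" "\<delta> * inv_trace (lower_gap l A) < 1"
  shows "1 / \<delta> - inv_trace (lower_gap l A) \<le> Re (mat_trace (lower_test \<delta> l A))"
  using inv_trace_shift_down(2)[OF assms, folded lower_gap_shift]
  by (simp add: lower_test_def Let_def mat_trace_add mat_trace_scale inv_trace_def inv_sq_trace_def)

lemma upper_barrier_step:
  assumes M: "pos_def (upper_gap u A)" and "\<delta> > 0" "0 < n" "t > 0"
    and t: "t * Re (qform (upper_test \<delta> u A) y) < 1"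
  defines "A' \<equiv> mat_add A (mat_scale (of_real t) (outer_prod y y))"
  shows "pos_def (upper_gap (u + \<delta>) A')"
    and "inv_trace (upper_gap (u + \<delta>) A') \<le> inv_trace (upper_gap u A)"
proof -
  let ?M' = "upper_gap (u + \<delta>) A"
  let ?X = "mat_inv ?M'"
  define D where "D = inv_trace (upper_gap u A) - inv_trace ?M'"
  define q1 where "q1 = Re (qform ?X y)"
  define q2 where "q2 = Re (qform (mat_mult ?X ?X) y)"
  have M': "pos_def ?M'"
    using pos_def_shift[OF M] \<open>\<delta> > 0\<close> by (simp add: upper_gap_shift)
  have "D > 0"
    using inv_trace_shift_up(1)[OF M \<open>\<delta> > 0\<close> \<open>0 < n\<close>] by (simp add: D_def upper_gap_shift)
  have "q1 \<ge> 0" "q2 \<ge> 0"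
    unfolding q1_def q2_def by (simp_all add: pos_def_qform_nonneg pos_def_inv qform_sq_nonneg hermitian_mat_inv M')
  have "Re (qform (upper_test \<delta> u A) y) = q2 / D + q1"
    by (simp add: upper_test_def Let_def qform_add qform_scale D_def q1_def q2_def)
  with t have t': "t * q2 / D + t * q1 < 1"
    by (simp add: distrib_left)
  then have "t * q1 < 1"
    using \<open>D > 0\<close> \<open>q2 \<ge> 0\<close> \<open>t > 0\<close> by (smt (verit) divide_nonneg_pos mult_nonneg_nonneg)
  then have pos: "1 + (- t) * Re (qform ?X y) > 0"
    by (simp add: q1_def)
  show "pos_def (upper_gap (u + \<delta>) A')"
    using pos_def_rank_one_update[OF M' pos] by (simp add: A'_def upper_gap_rank_one)
  have "t * q2 / (1 - t * q1) \<le> D"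
    using t' \<open>D > 0\<close> \<open>t * q1 < 1\<close> by (simp add: field_simps)
  then show "inv_trace (upper_gap (u + \<delta>) A') \<le> inv_trace (upper_gap u A)"
    using inv_trace_rank_one_update[OF M' pos]
    by (simp add: A'_def upper_gap_rank_one D_def q1_def q2_def)
qed

lemma lower_barrier_step:
  assumes N: "pos_def (lower_gap l A)" and "\<delta> > 0" "0 < n" and small: "\<delta> * inv_trace (lower_gap l A) < 1"
    and "t > 0" and t: "1 \<le> t * Re (qform (lower_test \<delta> l A) y)"
  defines "A' \<equiv> mat_add A (mat_scale (of_real t) (outer_prod y y))"
  shows "pos_def (lower_gap (l + \<delta>) A')"
    and "inv_trace (lower_gap (l + \<delta>) A') \<le> inv_trace (lower_gap l A)"
proof -
  let ?N' = "lower_gap (l + \<delta>) A"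
  let ?X = "mat_inv ?N'"
  define D where "D = inv_trace ?N' - inv_trace (lower_gap l A)"
  define q1 where "q1 = Re (qform ?X y)"
  define q2 where "q2 = Re (qform (mat_mult ?X ?X) y)"
  have N': "pos_def ?N'"
    using pos_def_shift_down[OF N _ small] \<open>\<delta> > 0\<close> by (simp add: lower_gap_shift)
  have "D > 0"
    using inv_trace_shift_down(1)[OF N \<open>\<delta> > 0\<close> \<open>0 < n\<close> small] by (simp add: D_def lower_gap_shift)
  have "q1 \<ge> 0"
    unfolding q1_def by (simp add: pos_def_qform_nonneg pos_def_inv N')
  have "Re (qform (lower_test \<delta> l A) y) = q2 / D - q1"
    by (simp add: lower_test_def Let_def qform_add qform_scale D_def q1_def q2_def)
  with t have t': "1 \<le> t * q2 / D - t * q1"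
    by (simp add: right_diff_distrib)
  have pos: "1 + t * Re (qform ?X y) > 0"
    using \<open>q1 \<ge> 0\<close> \<open>t > 0\<close> by (simp add: q1_def add_pos_nonneg)
  show "pos_def (lower_gap (l + \<delta>) A')"
    using pos_def_rank_one_update[OF N' pos] by (simp add: A'_def lower_gap_rank_one)
  have "D \<le> t * q2 / (1 + t * q1)"
    using t' \<open>D > 0\<close> pos by (simp add: field_simps q1_def)
  then show "inv_trace (lower_gap (l + \<delta>) A') \<le> inv_trace (lower_gap l A)"
    using inv_trace_rank_one_update[OF N' pos]
    by (simp add: A'_def lower_gap_rank_one D_def q1_def q2_def)
qed

lemma qform_upper_test_nonneg:
  assumes M: "pos_def (upper_gap u A)" and "\<delta> > 0" "0 < n"
  shows "Re (qform (upper_test \<delta> u A) y) \<ge> 0"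
proof -
  have M': "pos_def (upper_gap (u + \<delta>) A)"
    using pos_def_shift[OF M] \<open>\<delta> > 0\<close> by (simp add: upper_gap_shift)
  have "inv_trace (upper_gap (u + \<delta>) A) < inv_trace (upper_gap u A)"
    using inv_trace_shift_up(1)[OF M \<open>\<delta> > 0\<close> \<open>0 < n\<close>] by (simp add: upper_gap_shift)
  then show ?thesis
    by (simp add: upper_test_def Let_def qform_add qform_scale pos_def_qform_nonneg pos_def_inv
        qform_sq_nonneg hermitian_mat_inv M')
qed

text \<open>Shifts \<open>\<delta>\<^sub>U = 4\<close>, \<open>\<delta>\<^sub>L = 1\<close> and potential bounds \<open>\<epsilon>\<^sub>U = 1/8\<close>, \<open>\<epsilon>\<^sub>L = 1/2\<close> are chosen
  so that \<open>1/\<delta>\<^sub>U + \<epsilon>\<^sub>U < 1/\<delta>\<^sub>L - \<epsilon>\<^sub>L\<close>, which keeps the trace of the upper test matrix below that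
  of the lower one.\<close>

definition bss_invariant :: "real \<Rightarrow> real \<Rightarrow> cmat \<Rightarrow> bool" where
  "bss_invariant u l A \<longleftrightarrow> hermitian A \<and> pos_def (upper_gap u A) \<and> pos_def (lower_gap l A) \<and>
     inv_trace (upper_gap u A) \<le> 1/8 \<and> inv_trace (lower_gap l A) \<le> 1/2"

lemma bss_invariant_init:
  assumes "0 < n"
  shows "bss_invariant (8 * real n) (- 2 * real n) (\<lambda>_ _. 0)"
proof -
  have pos: "pos_def (mat_scale (of_real c) mat_id)" if "c > 0" for c
    using that by (auto simp: pos_def_def hermitian_scale qform_scale qform_id cinner_self_pos)
  have inv: "inv_trace (mat_scale (of_real c) mat_id) = real n / c" if "c > 0" for c
  proof -
    have "mat_mult (mat_scale (of_real c) mat_id) (mat_scale (of_real (1 / c)) mat_id) = mat_id"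
      using that by (simp add: mat_mult_scale_left mat_mult_scale_right mat_mult_id_left)
        (simp add: mat_scale_def)
    then have "mat_inv (mat_scale (of_real c) mat_id) = mat_scale (of_real (1 / c)) mat_id"
      by (intro mat_inv_unique pos that) simp
    then show ?thesis
      by (simp add: inv_trace_def mat_trace_scale mat_trace_id)
  qed
  have "upper_gap (8 * real n) (\<lambda>_ _. 0) = mat_scale (of_real (8 * real n)) mat_id"
    "lower_gap (- 2 * real n) (\<lambda>_ _. 0) = mat_scale (of_real (2 * real n)) mat_id"
    by (auto simp: upper_gap_def lower_gap_def mat_shift_def mat_add_def mat_scale_def)
  moreover have "inv_trace (mat_scale (of_real (8 * real n)) mat_id) = 1 / 8"
    "inv_trace (mat_scale (of_real (2 * real n)) mat_id) = 1 / 2"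
    using inv[of "8 * real n"] inv[of "2 * real n"] assms by simp_all
  moreover have "pos_def (mat_scale (of_real (8 * real n)) mat_id)"
    "pos_def (mat_scale (of_real (2 * real n)) mat_id)"
    using pos[of "8 * real n"] pos[of "2 * real n"] assms by simp_all
  moreover have "hermitian (\<lambda>_ _. 0)"
    by (simp add: hermitian_def is_mat_def mat_adj_def)
  ultimately show ?thesis
    unfolding bss_invariant_def by simp
qed

lemma bss_test_trace_gap:
  assumes "bss_invariant u l A" "0 < n"
  shows "Re (mat_trace (upper_test 4 u A)) < Re (mat_trace (lower_test 1 l A))"
proof -
  have "Re (mat_trace (upper_test 4 u A)) \<le> 1 / 4 + 1 / 8"
    using trace_upper_test[of u A 4] assms by (simp add: bss_invariant_def)
  moreover have "1 - 1 / 2 \<le> Re (mat_trace (lower_test 1 l A))"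
    using trace_lower_test[of l A 1] assms by (simp add: bss_invariant_def)
  ultimately show ?thesis
    by linarith
qed

lemma bss_invariant_step:
  assumes inv: "bss_invariant u l A" and "0 < n"
    and test: "Re (qform (upper_test 4 u A) y) < Re (qform (lower_test 1 l A) y)"
  defines "t \<equiv> 1 / Re (qform (lower_test 1 l A) y)"
  shows "t > 0" and "bss_invariant (u + 4) (l + 1) (mat_add A (mat_scale (of_real t) (outer_prod y y)))"
proof -
  have M: "pos_def (upper_gap u A)" and N: "pos_def (lower_gap l A)"
    and small: "1 * inv_trace (lower_gap l A) < 1"
    using inv by (auto simp: bss_invariant_def)
  have "Re (qform (lower_test 1 l A) y) > 0"
    using qform_upper_test_nonneg[OF M _ \<open>0 < n\<close>, of 4 y] test by simp
  then show "t > 0"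
    by (simp add: t_def)
  moreover have "t * Re (qform (upper_test 4 u A) y) < 1" "1 \<le> t * Re (qform (lower_test 1 l A) y)"
    using test \<open>Re (qform (lower_test 1 l A) y) > 0\<close> by (simp_all add: t_def)
  ultimately show "bss_invariant (u + 4) (l + 1) (mat_add A (mat_scale (of_real t) (outer_prod y y)))"
    using upper_barrier_step[OF M _ \<open>0 < n\<close>, of 4 t y] lower_barrier_step[OF N _ \<open>0 < n\<close> small, of t y] inv
    by (auto simp: bss_invariant_def intro!: hermitian_add hermitian_scale hermitian_outer_prod)
qed

lemma bss_invariant_qform_bounds:
  assumes "bss_invariant u l A"
  shows "l * Re (cinner y y) \<le> Re (qform A y)" and "Re (qform A y) \<le> u * Re (cinner y y)"
  using pos_def_qform_nonneg[of "lower_gap l A" y] pos_def_qform_nonneg[of "upper_gap u A" y] assms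
  by (simp_all add: bss_invariant_def qform_lower_gap qform_upper_gap)

lemma integral_qform_orthonormal:
  assumes "orthonormal_system M n e"
  shows "integrable M (\<lambda>x. qform Z (\<lambda>k. e k x))" and "(\<integral>x. qform Z (\<lambda>k. e k x) \<partial>M) = mat_trace Z"
proof -
  have int: "integrable M (\<lambda>x. Z i j * (e j x * cnj (e i x)))" if "i < n" "j < n" for i j
    using assms that by (intro integrable_mult_right square_integrable_mult_cnj) (auto simp: orthonormal_system_def)
  then show "integrable M (\<lambda>x. qform Z (\<lambda>k. e k x))"
    unfolding qform_expand by (intro Bochner_Integration.integrable_sum) simp
  have "(\<integral>x. qform Z (\<lambda>k. e k x) \<partial>M) = (\<Sum>i<n. \<integral>x. (\<Sum>j<n. Z i j * (e j x * cnj (e i x))) \<partial>M)"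
    unfolding qform_expand using int
    by (intro Bochner_Integration.integral_sum Bochner_Integration.integrable_sum) simp
  also have "\<dots> = (\<Sum>i<n. \<Sum>j<n. \<integral>x. Z i j * (e j x * cnj (e i x)) \<partial>M)"
    using int by (intro sum.cong refl Bochner_Integration.integral_sum) simp
  also have "\<dots> = (\<Sum>i<n. \<Sum>j<n. Z i j * (\<integral>x. e j x * cnj (e i x) \<partial>M))"
    by simp
  also have "\<dots> = mat_trace Z"
    using assms by (simp add: orthonormal_system_def mat_trace_def times_if_distrib cong: if_cong)
  finally show "(\<integral>x. qform Z (\<lambda>k. e k x) \<partial>M) = mat_trace Z" .
qed

lemma integral_Re_qform_orthonormal:
  "orthonormal_system M n e \<Longrightarrow> (\<integral>x. Re (qform Z (\<lambda>k. e k x)) \<partial>M) = Re (mat_trace Z)"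
  using integral_Re[OF integral_qform_orthonormal(1)] integral_qform_orthonormal(2) by metis

lemma integral_norm_sq_orthonormal:
  assumes "orthonormal_system M n e"
  shows "(\<integral>x. (cmod (\<Sum>k<n. \<beta> k * e k x))\<^sup>2 \<partial>M) = (\<Sum>k<n. (cmod (\<beta> k))\<^sup>2)"
proof -
  define b where "b = (\<lambda>k. cnj (\<beta> k))"
  have "cinner (\<lambda>k. e k x) b = cnj (\<Sum>k<n. \<beta> k * e k x)" for x
    by (simp add: cinner_def b_def mult.commute)
  then have "cmod (cinner (\<lambda>k. e k x) b) = cmod (\<Sum>k<n. \<beta> k * e k x)" for x
    by (simp only: complex_mod_cnj)
  then have "(cmod (\<Sum>k<n. \<beta> k * e k x))\<^sup>2 = Re (qform (outer_prod b b) (\<lambda>k. e k x))" for x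
    by (simp add: qform_outer_prod_self del: of_real_power)
  then have "(\<integral>x. (cmod (\<Sum>k<n. \<beta> k * e k x))\<^sup>2 \<partial>M) = Re (mat_trace (outer_prod b b))"
    using integral_Re_qform_orthonormal[OF assms] by simp
  also have "\<dots> = (\<Sum>k<n. (cmod (\<beta> k))\<^sup>2)"
    by (simp add: mat_trace_outer_prod cinner_self b_def)
  finally show ?thesis .
qed

section \<open>Discretization of \<open>L\<^sub>2\<close> norms\<close>

text \<open>Averaging over \<open>M\<close> replaces the random choice of Batson, Spielman and Srivastava: for an
  orthonormal system the mean of \<open>qform Z (e x)\<close> is \<open>mat_trace Z\<close>.\<close>

lemma bss_exists_point:
  assumes e: "orthonormal_system M n e" and "AE x in M. P x" "bss_invariant u l A" "0 < n"
  shows "\<exists>x\<in>space M. P x \<and>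
    Re (qform (upper_test 4 u A) (\<lambda>k. e k x)) < Re (qform (lower_test 1 l A) (\<lambda>k. e k x))"
proof (rule ccontr)
  assume contra: "\<not> ?thesis"
  have "AE x in M. Re (qform (lower_test 1 l A) (\<lambda>k. e k x)) \<le> Re (qform (upper_test 4 u A) (\<lambda>k. e k x))"
    using \<open>AE x in M. P x\<close> by (rule AE_mp) (rule AE_I2, use contra in \<open>auto simp: not_less\<close>)
  then have "(\<integral>x. Re (qform (lower_test 1 l A) (\<lambda>k. e k x)) \<partial>M)
      \<le> (\<integral>x. Re (qform (upper_test 4 u A) (\<lambda>k. e k x)) \<partial>M)"
    by (intro integral_mono_AE integrable_Re integral_qform_orthonormal(1)[OF e])
  then show False
    using bss_test_trace_gap[OF assms(3,4)] by (simp add: integral_Re_qform_orthonormal[OF e])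
qed

lemma bss_sampling:
  assumes e: "orthonormal_system M n e" and P: "AE x in M. P x" and "0 < n"
  shows "\<exists>\<xi> w A. (\<forall>\<nu><q. \<xi> \<nu> \<in> space M \<and> P (\<xi> \<nu>) \<and> w \<nu> > 0) \<and>
    bss_invariant (8 * real n + 4 * real q) (- 2 * real n + real q) A \<and>
    (\<forall>y. Re (qform A y) = (\<Sum>\<nu><q. w \<nu> * (cmod (cinner y (\<lambda>k. e k (\<xi> \<nu>))))\<^sup>2))"
proof (induction q)
  case 0
  have "qform (\<lambda>_ _. 0) y = 0" for y
    by (simp add: qform_expand)
  then show ?case
    using bss_invariant_init[OF \<open>0 < n\<close>] by (intro exI[of _ undefined] exI[of _ "\<lambda>_ _. 0"]) simp
next
  case (Suc q)
  then obtain \<xi> w A where points: "\<forall>\<nu><q. \<xi> \<nu> \<in> space M \<and> P (\<xi> \<nu>) \<and> w \<nu> > 0"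
    and inv: "bss_invariant (8 * real n + 4 * real q) (- 2 * real n + real q) A"
    and A: "\<forall>y. Re (qform A y) = (\<Sum>\<nu><q. w \<nu> * (cmod (cinner y (\<lambda>k. e k (\<xi> \<nu>))))\<^sup>2)"
    by blast
  obtain x where x: "x \<in> space M" "P x"
    and test: "Re (qform (upper_test 4 (8 * real n + 4 * real q) A) (\<lambda>k. e k x))
      < Re (qform (lower_test 1 (- 2 * real n + real q) A) (\<lambda>k. e k x))"
    using bss_exists_point[OF e P inv \<open>0 < n\<close>] by blast
  define t where "t = 1 / Re (qform (lower_test 1 (- 2 * real n + real q) A) (\<lambda>k. e k x))"
  define A' where "A' = mat_add A (mat_scale (of_real t) (outer_prod (\<lambda>k. e k x) (\<lambda>k. e k x)))"
  note step = bss_invariant_step[OF inv \<open>0 < n\<close> test, folded t_def A'_def]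
  have "Re (qform A' y) = (\<Sum>\<nu><Suc q. (w(q := t)) \<nu> * (cmod (cinner y (\<lambda>k. e k ((\<xi>(q := x)) \<nu>))))\<^sup>2)" for y
    using A by (simp add: A'_def qform_add qform_scale qform_outer_prod_self del: of_real_power)
  moreover have "bss_invariant (8 * real n + 4 * real (Suc q)) (- 2 * real n + real (Suc q)) A'"
    using step(2) by (simp add: algebra_simps)
  moreover have "\<forall>\<nu><Suc q. (\<xi>(q := x)) \<nu> \<in> space M \<and> P ((\<xi>(q := x)) \<nu>) \<and> (w(q := t)) \<nu> > 0"
    using points x step(1) by (simp add: less_Suc_eq)
  ultimately show ?case
    by blast
qed

lemma L2_discretization:
  assumes "prob_space M" and e: "orthonormal_system M n e" and P: "AE x in M. P x"
    and m: "4 * real n \<le> real m"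
  shows "\<exists>\<xi> w. (\<forall>\<nu><m. \<xi> \<nu> \<in> space M \<and> P (\<xi> \<nu>) \<and> w \<nu> > 0) \<and>
    (\<forall>\<beta>. (\<Sum>k<n. (cmod (\<beta> k))\<^sup>2) \<le> (\<Sum>\<nu><m. w \<nu> * (cmod (\<Sum>k<n. \<beta> k * e k (\<xi> \<nu>)))\<^sup>2) \<and>
         (\<Sum>\<nu><m. w \<nu> * (cmod (\<Sum>k<n. \<beta> k * e k (\<xi> \<nu>)))\<^sup>2) \<le> 12 * (\<Sum>k<n. (cmod (\<beta> k))\<^sup>2))"
proof (cases "n = 0")
  case True
  have "AE x in M. x \<in> space M \<and> P x"
    using P by (simp add: AE_space)
  then have "\<exists>x. x \<in> space M \<and> P x"
    by (rule eventually_happens'[OF prob_space.ae_filter_bot[OF \<open>prob_space M\<close>]])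
  then obtain x where "x \<in> space M" "P x"
    by blast
  then show ?thesis
    using True by (intro exI[of _ "\<lambda>_. x"] exI[of _ "\<lambda>_. 1"]) simp
next
  case False
  then have "0 < n" "real m > 0"
    using m by simp_all
  obtain \<xi> w A where points: "\<forall>\<nu><m. \<xi> \<nu> \<in> space M \<and> P (\<xi> \<nu>) \<and> w \<nu> > 0"
    and inv: "bss_invariant (8 * real n + 4 * real m) (- 2 * real n + real m) A"
    and A: "\<forall>y. Re (qform A y) = (\<Sum>\<nu><m. w \<nu> * (cmod (cinner y (\<lambda>k. e k (\<xi> \<nu>))))\<^sup>2)"
    using bss_sampling[OF e P \<open>0 < n\<close>, of m] by blast
  show ?thesis
  proof (intro exI[of _ \<xi>] exI[of _ "\<lambda>\<nu>. 2 / real m * w \<nu>"] conjI allI impI)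
    fix \<nu> assume "\<nu> < m"
    then show "\<xi> \<nu> \<in> space M" "P (\<xi> \<nu>)" "2 / real m * w \<nu> > 0"
      using points \<open>real m > 0\<close> by simp_all
  next
    fix \<beta> :: "nat \<Rightarrow> complex"
    define B where "B = (\<Sum>k<n. (cmod (\<beta> k))\<^sup>2)"
    define S where "S = (\<Sum>\<nu><m. w \<nu> * (cmod (\<Sum>k<n. \<beta> k * e k (\<xi> \<nu>)))\<^sup>2)"
    let ?y = "\<lambda>k. cnj (\<beta> k)"
    have "Re (cinner ?y ?y) = B"
      by (simp add: cinner_self B_def)
    moreover have "Re (qform A ?y) = S"
      using A by (simp add: S_def cinner_def)
    ultimately have "(- 2 * real n + real m) * B \<le> S" "S \<le> (8 * real n + 4 * real m) * B"
      using bss_invariant_qform_bounds[OF inv, of ?y] by simp_all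
    moreover have "B \<ge> 0"
      by (simp add: B_def sum_nonneg)
    then have "real m / 2 * B \<le> (- 2 * real n + real m) * B" "(8 * real n + 4 * real m) * B \<le> 6 * real m * B"
      using m by (intro mult_right_mono; simp)+
    ultimately have "B \<le> 2 / real m * S" "2 / real m * S \<le> 12 * B"
      using \<open>real m > 0\<close> by (simp_all add: field_simps)
    moreover have "(\<Sum>\<nu><m. 2 / real m * w \<nu> * (cmod (\<Sum>k<n. \<beta> k * e k (\<xi> \<nu>)))\<^sup>2) = 2 / real m * S"
      by (simp add: S_def sum_distrib_left mult.assoc)
    ultimately show "(\<Sum>k<n. (cmod (\<beta> k))\<^sup>2) \<le> (\<Sum>\<nu><m. 2 / real m * w \<nu> * (cmod (\<Sum>k<n. \<beta> k * e k (\<xi> \<nu>)))\<^sup>2)"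
      and "(\<Sum>\<nu><m. 2 / real m * w \<nu> * (cmod (\<Sum>k<n. \<beta> k * e k (\<xi> \<nu>)))\<^sup>2) \<le> 12 * (\<Sum>k<n. (cmod (\<beta> k))\<^sup>2)"
      by (simp_all add: B_def)
  qed
qed

end

section \<open>Powers of a finite-dimensional space\<close>

lemma prod_le_sum_power:
  fixes a :: "nat \<Rightarrow> real"
  assumes "\<And>j. j < s \<Longrightarrow> a j \<ge> 0" and "s \<ge> 1"
  shows "(\<Prod>j<s. a j) \<le> (\<Sum>j<s. a j ^ s)"
proof -
  have "a 0 \<in> a ` {..<s}"
    using \<open>s \<ge> 1\<close> by simp
  then have "Max (a ` {..<s}) \<in> a ` {..<s}"
    by (intro Max_in) blast+
  then obtain j0 where "j0 < s" "a j0 = Max (a ` {..<s})"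
    by auto
  then have j0: "j0 < s" "\<And>j. j < s \<Longrightarrow> a j \<le> a j0"
    using Max_ge[of "a ` {..<s}"] by auto
  have "(\<Prod>j<s. a j) \<le> (\<Prod>j<s. a j0)"
    by (rule prod_mono) (use assms j0 in auto)
  also have "\<dots> = a j0 ^ s"
    by simp
  also have "\<dots> \<le> (\<Sum>j<s. a j ^ s)"
    by (rule member_le_sum) (use j0 assms in auto)
  finally show ?thesis .
qed

lemma square_integrable_prod:
  fixes u :: "nat \<Rightarrow> 'a \<Rightarrow> complex"
  assumes meas: "\<And>i. i < N \<Longrightarrow> u i \<in> borel_measurable M"
    and int: "\<And>i. i < N \<Longrightarrow> integrable M (\<lambda>x. norm (u i x) ^ (2 * s))"
    and "1 \<le> s" and \<alpha>: "\<alpha> \<in> {..<s} \<rightarrow>\<^sub>E {..<N}"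
  shows "square_integrable M (\<lambda>x. \<Prod>j<s. u (\<alpha> j) x)"
proof -
  have \<alpha>N: "\<alpha> j < N" if "j < s" for j
    using \<alpha> that by auto
  have prod_meas: "(\<lambda>x. \<Prod>j<s. u (\<alpha> j) x) \<in> borel_measurable M"
    by (rule borel_measurable_prod) (simp add: meas \<alpha>N)
  have bound: "(cmod (\<Prod>j<s. u (\<alpha> j) x))\<^sup>2 \<le> (\<Sum>j<s. norm (u (\<alpha> j) x) ^ (2 * s))" for x
  proof -
    have "(cmod (\<Prod>j<s. u (\<alpha> j) x))\<^sup>2 = (\<Prod>j<s. (cmod (u (\<alpha> j) x))\<^sup>2)"
      by (simp add: prod_norm power2_eq_square prod.distrib)
    also have "\<dots> \<le> (\<Sum>j<s. ((cmod (u (\<alpha> j) x))\<^sup>2) ^ s)"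
      by (rule prod_le_sum_power) (use \<open>1 \<le> s\<close> in auto)
    finally show ?thesis
      by (simp add: power_mult)
  qed
  have "integrable M (\<lambda>x. (cmod (\<Prod>j<s. u (\<alpha> j) x))\<^sup>2)"
  proof (rule Bochner_Integration.integrable_bound[OF _ _ AE_I2])
    show "integrable M (\<lambda>x. \<Sum>j<s. norm (u (\<alpha> j) x) ^ (2 * s))"
      using int \<alpha>N by (intro Bochner_Integration.integrable_sum) simp
  qed (use prod_meas bound in \<open>auto simp: sum_nonneg\<close>)
  then show ?thesis
    using prod_meas by (simp add: square_integrable_def)
qed

lemma power_sum_expand:
  fixes c g :: "nat \<Rightarrow> 'b :: comm_semiring_1"
  shows "(\<Sum>i<N. c i * g i) ^ s = (\<Sum>\<alpha>\<in>{..<s} \<rightarrow>\<^sub>E {..<N}. (\<Prod>j<s. c (\<alpha> j)) * (\<Prod>j<s. g (\<alpha> j)))"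
proof -
  have "(\<Sum>i<N. c i * g i) ^ s = (\<Prod>j<s. \<Sum>i<N. c i * g i)"
    by simp
  also have "\<dots> = (\<Sum>\<alpha>\<in>{..<s} \<rightarrow>\<^sub>E {..<N}. \<Prod>j<s. c (\<alpha> j) * g (\<alpha> j))"
    by (rule prod_sum_PiE) auto
  finally show ?thesis
    by (simp add: prod.distrib)
qed

lemma power_span_orthonormal:
  fixes u :: "nat \<Rightarrow> 'a \<Rightarrow> complex"
  assumes meas: "\<And>i. i < N \<Longrightarrow> u i \<in> borel_measurable M"
    and int: "\<And>i. i < N \<Longrightarrow> integrable M (\<lambda>x. norm (u i x) ^ (2 * s))" and "1 \<le> s"
  shows "\<exists>n e P. n \<le> N ^ s \<and> orthonormal_system M n e \<and> (AE x in M. P x) \<and>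
    (\<forall>c. \<exists>\<beta>. \<forall>x. P x \<longrightarrow> (\<Sum>i<N. c i * u i x) ^ s = (\<Sum>k<n. \<beta> k * e k x))"
proof -
  define I where "I = {..<s} \<rightarrow>\<^sub>E {..<N}"
  define \<phi> where "\<phi> \<alpha> x = (\<Prod>j<s. u (\<alpha> j) x)" for \<alpha> x
  have "finite I" "card I = N ^ s"
    by (simp_all add: I_def finite_PiE card_PiE)
  then have "finite (\<phi> ` I)" "card (\<phi> ` I) \<le> N ^ s"
    using card_image_le[of I \<phi>] by auto
  moreover have "square_integrable M (\<phi> \<alpha>)" if "\<alpha> \<in> I" for \<alpha>
    unfolding \<phi>_def
    by (rule square_integrable_prod[where N = N]) (use meas int \<open>1 \<le> s\<close> that in \<open>auto simp: I_def\<close>)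
  ultimately obtain n e where "n \<le> card (\<phi> ` I)" and e: "orthonormal_system M n e"
    and span: "\<forall>f\<in>\<phi> ` I. \<exists>b. AE x in M. f x = (\<Sum>k<n. b k * e k x)"
    using gram_schmidt[of "\<phi> ` I" M] by blast
  obtain B where B: "\<forall>f\<in>\<phi> ` I. AE x in M. f x = (\<Sum>k<n. B f k * e k x)"
    using bchoice[OF span] by blast
  define P where "P x \<longleftrightarrow> (\<forall>\<alpha>\<in>I. \<phi> \<alpha> x = (\<Sum>k<n. B (\<phi> \<alpha>) k * e k x))" for x
  have "AE x in M. P x"
    unfolding P_def by (rule AE_finite_allI[OF \<open>finite I\<close>]) (use B in blast)
  moreover have "(\<Sum>i<N. c i * u i x) ^ s = (\<Sum>k<n. (\<Sum>\<alpha>\<in>I. (\<Prod>j<s. c (\<alpha> j)) * B (\<phi> \<alpha>) k) * e k x)"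
    if "P x" for c x
  proof -
    have \<phi>: "\<phi> \<alpha> x = (\<Sum>k<n. B (\<phi> \<alpha>) k * e k x)" if "\<alpha> \<in> I" for \<alpha>
      using \<open>P x\<close> that unfolding P_def by blast
    have "(\<Sum>i<N. c i * u i x) ^ s = (\<Sum>\<alpha>\<in>I. (\<Prod>j<s. c (\<alpha> j)) * \<phi> \<alpha> x)"
      by (simp add: power_sum_expand I_def \<phi>_def)
    also have "\<dots> = (\<Sum>\<alpha>\<in>I. \<Sum>k<n. (\<Prod>j<s. c (\<alpha> j)) * B (\<phi> \<alpha>) k * e k x)"
      by (intro sum.cong refl) (simp add: \<phi> sum_distrib_left mult.assoc)
    also have "\<dots> = (\<Sum>k<n. \<Sum>\<alpha>\<in>I. (\<Prod>j<s. c (\<alpha> j)) * B (\<phi> \<alpha>) k * e k x)"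
      by (rule sum.swap)
    finally show ?thesis
      by (simp add: sum_distrib_right)
  qed
  ultimately show ?thesis
    using le_trans[OF \<open>n \<le> card (\<phi> ` I)\<close> \<open>card (\<phi> ` I) \<le> N ^ s\<close>] e
    by (intro exI[of _ n] exI[of _ e] exI[of _ P]) (auto intro!: exI)
qed

lemma cmod_power_double: "cmod z ^ (2 * s) = (cmod (z ^ s))\<^sup>2"
  by (simp add: norm_power power_mult[symmetric] mult.commute)

lemma integral_power_orthonormal:
  assumes e: "orthonormal_system M n e" and "AE x in M. P x" and "f \<in> borel_measurable M"
    and f: "\<And>x. P x \<Longrightarrow> f x ^ s = (\<Sum>k<n. \<beta> k * e k x)"
  shows "(\<integral>x. cmod (f x) ^ (2 * s) \<partial>M) = (\<Sum>k<n. (cmod (\<beta> k))\<^sup>2)"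
proof -
  have "(\<lambda>x. \<Sum>k<n. \<beta> k * e k x) \<in> borel_measurable M"
    using e by (intro borel_measurable_sum borel_measurable_times)
      (auto simp: orthonormal_system_def square_integrable_def)
  then have "(\<integral>x. cmod (f x) ^ (2 * s) \<partial>M) = (\<integral>x. (cmod (\<Sum>k<n. \<beta> k * e k x))\<^sup>2 \<partial>M)"
    using \<open>AE x in M. P x\<close> \<open>f \<in> borel_measurable M\<close>
    by (intro integral_cong_AE) (auto simp: cmod_power_double f)
  also have "\<dots> = (\<Sum>k<n. (cmod (\<beta> k))\<^sup>2)"
    by (rule square_matrices.integral_norm_sq_orthonormal[OF e])
  finally show ?thesis .
qed

theorem power_discretization_complex:
  fixes M :: "'a measure" and u :: "nat \<Rightarrow> 'a \<Rightarrow> complex"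
  assumes "prob_space M" "1 \<le> s"
    and meas: "\<And>i. i < N \<Longrightarrow> u i \<in> borel_measurable M"
    and int: "\<And>i. i < N \<Longrightarrow> integrable M (\<lambda>x. norm (u i x) ^ (2 * s))"
    and m: "4 * real N ^ s \<le> real m"
  shows "\<exists>\<xi> w. (\<forall>\<nu><m. \<xi> \<nu> \<in> space M \<and> w \<nu> > 0) \<and>
    (\<forall>c. (\<integral>x. cmod (\<Sum>i<N. c i * u i x) ^ (2 * s) \<partial>M) \<le> (\<Sum>\<nu><m. w \<nu> * cmod (\<Sum>i<N. c i * u i (\<xi> \<nu>)) ^ (2 * s)) \<and>
         (\<Sum>\<nu><m. w \<nu> * cmod (\<Sum>i<N. c i * u i (\<xi> \<nu>)) ^ (2 * s)) \<le> 12 * (\<integral>x. cmod (\<Sum>i<N. c i * u i x) ^ (2 * s) \<partial>M))"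
proof -
  obtain n e P where "n \<le> N ^ s" and e: "orthonormal_system M n e" and P: "AE x in M. P x"
    and span: "\<forall>c. \<exists>\<beta>. \<forall>x. P x \<longrightarrow> (\<Sum>i<N. c i * u i x) ^ s = (\<Sum>k<n. \<beta> k * e k x)"
    using power_span_orthonormal[where N = N and u = u and M = M, OF meas int \<open>1 \<le> s\<close>] by blast
  have "4 * real n \<le> real m"
    using \<open>n \<le> N ^ s\<close> m by (smt (verit) of_nat_le_iff of_nat_power)
  then obtain \<xi> w where points: "\<forall>\<nu><m. \<xi> \<nu> \<in> space M \<and> P (\<xi> \<nu>) \<and> w \<nu> > 0"
    and discrete: "\<forall>\<beta>. (\<Sum>k<n. (cmod (\<beta> k))\<^sup>2) \<le> (\<Sum>\<nu><m. w \<nu> * (cmod (\<Sum>k<n. \<beta> k * e k (\<xi> \<nu>)))\<^sup>2) \<and>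
      (\<Sum>\<nu><m. w \<nu> * (cmod (\<Sum>k<n. \<beta> k * e k (\<xi> \<nu>)))\<^sup>2) \<le> 12 * (\<Sum>k<n. (cmod (\<beta> k))\<^sup>2)"
    using square_matrices.L2_discretization[OF \<open>prob_space M\<close> e P] by blast
  have "(\<integral>x. cmod (\<Sum>i<N. c i * u i x) ^ (2 * s) \<partial>M) \<le> (\<Sum>\<nu><m. w \<nu> * cmod (\<Sum>i<N. c i * u i (\<xi> \<nu>)) ^ (2 * s)) \<and>
    (\<Sum>\<nu><m. w \<nu> * cmod (\<Sum>i<N. c i * u i (\<xi> \<nu>)) ^ (2 * s)) \<le> 12 * (\<integral>x. cmod (\<Sum>i<N. c i * u i x) ^ (2 * s) \<partial>M)"
    for c
  proof -
    obtain \<beta> where \<beta>: "\<And>x. P x \<Longrightarrow> (\<Sum>i<N. c i * u i x) ^ s = (\<Sum>k<n. \<beta> k * e k x)"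
      using span by blast
    have "(\<lambda>x. \<Sum>i<N. c i * u i x) \<in> borel_measurable M"
      using meas by measurable
    then have "(\<integral>x. cmod (\<Sum>i<N. c i * u i x) ^ (2 * s) \<partial>M) = (\<Sum>k<n. (cmod (\<beta> k))\<^sup>2)"
      using integral_power_orthonormal[OF e P] \<beta> by blast
    moreover have "(\<Sum>\<nu><m. w \<nu> * cmod (\<Sum>i<N. c i * u i (\<xi> \<nu>)) ^ (2 * s))
        = (\<Sum>\<nu><m. w \<nu> * (cmod (\<Sum>k<n. \<beta> k * e k (\<xi> \<nu>)))\<^sup>2)"
      using points by (intro sum.cong refl) (simp add: cmod_power_double \<beta>)
    ultimately show ?thesis
      using discrete by simp
  qed
  then show ?thesis
    using points by blast
qed

corollary power_discretization_real:
  fixes M :: "'a measure" and u :: "nat \<Rightarrow> 'a \<Rightarrow> real"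
  assumes "prob_space M" "1 \<le> s"
    and meas: "\<And>i. i < N \<Longrightarrow> u i \<in> borel_measurable M"
    and int: "\<And>i. i < N \<Longrightarrow> integrable M (\<lambda>x. norm (u i x) ^ (2 * s))"
    and m: "4 * real N ^ s \<le> real m"
  shows "\<exists>\<xi> w. (\<forall>\<nu><m. \<xi> \<nu> \<in> space M \<and> w \<nu> > 0) \<and>
    (\<forall>c. (\<integral>x. \<bar>\<Sum>i<N. c i * u i x\<bar> ^ (2 * s) \<partial>M) \<le> (\<Sum>\<nu><m. w \<nu> * \<bar>\<Sum>i<N. c i * u i (\<xi> \<nu>)\<bar> ^ (2 * s)) \<and>
         (\<Sum>\<nu><m. w \<nu> * \<bar>\<Sum>i<N. c i * u i (\<xi> \<nu>)\<bar> ^ (2 * s)) \<le> 12 * (\<integral>x. \<bar>\<Sum>i<N. c i * u i x\<bar> ^ (2 * s) \<partial>M))"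
proof -
  have "(\<lambda>x. complex_of_real (u i x)) \<in> borel_measurable M" "integrable M (\<lambda>x. norm (complex_of_real (u i x)) ^ (2 * s))"
    if "i < N" for i
    using meas[OF that] int[OF that] by simp_all
  from power_discretization_complex[where u = "\<lambda>i x. of_real (u i x)", OF \<open>prob_space M\<close> \<open>1 \<le> s\<close> this m]
  obtain \<xi> w where points: "\<forall>\<nu><m. \<xi> \<nu> \<in> space M \<and> w \<nu> > 0"
    and bounds: "\<forall>c. (\<integral>x. cmod (\<Sum>i<N. c i * of_real (u i x)) ^ (2 * s) \<partial>M)
        \<le> (\<Sum>\<nu><m. w \<nu> * cmod (\<Sum>i<N. c i * of_real (u i (\<xi> \<nu>))) ^ (2 * s)) \<and>
      (\<Sum>\<nu><m. w \<nu> * cmod (\<Sum>i<N. c i * of_real (u i (\<xi> \<nu>))) ^ (2 * s))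
        \<le> 12 * (\<integral>x. cmod (\<Sum>i<N. c i * of_real (u i x)) ^ (2 * s) \<partial>M)"
    by blast
  have real: "cmod (\<Sum>i<N. of_real (c i) * of_real (u i x)) = \<bar>\<Sum>i<N. c i * u i x\<bar>" for c x
    by (simp flip: of_real_mult of_real_sum)
  show ?thesis
    using points bounds[rule_format, of "\<lambda>i. of_real (c i)" for c] unfolding real by blast
qed

corollary Lp_pow_discretization_real:
  fixes u :: "nat \<Rightarrow> (nat \<Rightarrow> real) \<Rightarrow> real"
  assumes "compact_borel_prob d \<Omega> \<mu>" "2 \<le> s" "L_basis \<mu> s N u" "4 * real N ^ s \<le> real m"
  shows "\<exists>\<xi> w. (\<forall>\<nu><m. \<xi> \<nu> \<in> \<Omega> \<and> w \<nu> > 0) \<and> (\<forall>c. let f = \<lambda>x. \<Sum>i<N. c i * u i x in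
    Lp_pow \<mu> s f \<le> (\<Sum>\<nu><m. w \<nu> * \<bar>f (\<xi> \<nu>)\<bar> ^ (2 * s)) \<and>
    (\<Sum>\<nu><m. w \<nu> * \<bar>f (\<xi> \<nu>)\<bar> ^ (2 * s)) \<le> 12 * Lp_pow \<mu> s f)"
proof -
  have "prob_space \<mu>" "space \<mu> = \<Omega>" "1 \<le> s"
    using assms(1,2) by (simp_all add: compact_borel_prob_def)
  with power_discretization_real[of \<mu> s N u m] assms(3,4) show ?thesis
    unfolding Lp_pow_def Let_def real_norm_def by (auto simp: L_basis_def)
qed

corollary Lp_pow_discretization_complex:
  fixes u :: "nat \<Rightarrow> (nat \<Rightarrow> real) \<Rightarrow> complex"
  assumes "compact_borel_prob d \<Omega> \<mu>" "2 \<le> s" "L_basis \<mu> s N u" "4 * real N ^ s \<le> real m"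
  shows "\<exists>\<xi> w. (\<forall>\<nu><m. \<xi> \<nu> \<in> \<Omega> \<and> w \<nu> > 0) \<and> (\<forall>c. let f = \<lambda>x. \<Sum>i<N. c i * u i x in
    Lp_pow \<mu> s f \<le> (\<Sum>\<nu><m. w \<nu> * cmod (f (\<xi> \<nu>)) ^ (2 * s)) \<and>
    (\<Sum>\<nu><m. w \<nu> * cmod (f (\<xi> \<nu>)) ^ (2 * s)) \<le> 12 * Lp_pow \<mu> s f)"
proof -
  have "prob_space \<mu>" "space \<mu> = \<Omega>" "1 \<le> s"
    using assms(1,2) by (simp_all add: compact_borel_prob_def)
  with power_discretization_complex[of \<mu> s N u m] assms(3,4) show ?thesis
    unfolding Lp_pow_def Let_def by (auto simp: L_basis_def)
qed

theorem mainTheorem7: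
  shows "\<exists>C1 C2 C3 :: real. C1 > 0 \<and> C2 > 0 \<and> C3 > 0 \<and>
    (\<forall>(d::nat) \<Omega> \<mu> (s::nat) (N::nat) (u :: nat \<Rightarrow> (nat \<Rightarrow> real) \<Rightarrow> real) (m::nat).
       compact_borel_prob d \<Omega> \<mu> \<and> s \<ge> 2 \<and> L_basis \<mu> s N u \<and> real m \<ge> C3 * real N ^ s \<longrightarrow>
       (\<exists>(\<xi> :: nat \<Rightarrow> nat \<Rightarrow> real) (w :: nat \<Rightarrow> real).
          (\<forall>\<nu><m. \<xi> \<nu> \<in> \<Omega> \<and> w \<nu> > 0) \<and>
          (\<forall>c :: nat \<Rightarrow> real. let f = (\<lambda>x. \<Sum>i<N. c i * u i x) in
             C1 * Lp_pow \<mu> s f \<le> (\<Sum>\<nu><m. w \<nu> * \<bar>f (\<xi> \<nu>)\<bar> ^ (2 * s)) \<and>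
             (\<Sum>\<nu><m. w \<nu> * \<bar>f (\<xi> \<nu>)\<bar> ^ (2 * s)) \<le> C2 * Lp_pow \<mu> s f))) \<and>
    (\<forall>(d::nat) \<Omega> \<mu> (s::nat) (N::nat) (u :: nat \<Rightarrow> (nat \<Rightarrow> real) \<Rightarrow> complex) (m::nat).
       compact_borel_prob d \<Omega> \<mu> \<and> s \<ge> 2 \<and> L_basis \<mu> s N u \<and> real m \<ge> C3 * real N ^ s \<longrightarrow>
       (\<exists>(\<xi> :: nat \<Rightarrow> nat \<Rightarrow> real) (w :: nat \<Rightarrow> real).
          (\<forall>\<nu><m. \<xi> \<nu> \<in> \<Omega> \<and> w \<nu> > 0) \<and>
          (\<forall>c :: nat \<Rightarrow> complex. let f = (\<lambda>x. \<Sum>i<N. c i * u i x) in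
             C1 * Lp_pow \<mu> s f \<le> (\<Sum>\<nu><m. w \<nu> * cmod (f (\<xi> \<nu>)) ^ (2 * s)) \<and>
             (\<Sum>\<nu><m. w \<nu> * cmod (f (\<xi> \<nu>)) ^ (2 * s)) \<le> C2 * Lp_pow \<mu> s f)))"
  using Lp_pow_discretization_real Lp_pow_discretization_complex
  by (intro exI[of _ 1] exI[of _ 12] exI[of _ 4]) auto

end
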